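(* Consider the sharing problem $\min_{\bm x\in\mathbb R^{nN}}\Phi(\bm x):=\frac1N\sum_{i=1}^Nf_i(x_i)+g(\sum_{i=1}^Nx_i)$, where $g:\mathbb R^n\to\mathbb R\cup\{+\infty\}$ is proper, convex and lsc, each $f_i:\mathbb R^n\to\mathbb R$ is differentiable with $L_{f_i}$-Lipschitz gradient, and $\Phi$ is coercive and has the KL property with exponent $\theta\in(0,1)$ (e.g. when $g$ and all $f_i$ are semialgebraic). Then with any essentially cyclic index selection, the sequence $\bm z^k=(s_1^k+\gamma_1w^k,\dots,s_N^k+\gamma_Nw^k)$ produced by the sharing algorithm below converges surely to a point $\bm x^\star$ with $0\in\hat\partial\Phi(\bm x^\star)$; if moreover $\theta\le\frac12$, the convergence is R-linear.
   Context: Sharing algorithm: choose $\bm x^{\mathrm{init}}=(x_1^{\mathrm{init}},\dots,x_N^{\mathrm{init}})$ and $\gamma_i\in(0,N/L_{f_i})$; set $\tilde\gamma=\sum_i\gamma_i$, $s_i=x_i^{\mathrm{init}}-\frac{\gamma_i}N\nabla f_i(x_i^{\mathrm{init}})$, $\tilde s=\sum_is_i$. At iteration $k$ (current values $s_i^k,\tilde s^k$): select $I^{k+1}\subseteq[N]$; set $w^k=\tilde\gamma^{-1}(\operatorname{prox}_{\tilde\gamma g}(\tilde s)-\tilde s)$; for each $i\in I^{k+1}$: $v_i=s_i+\gamma_iw^k-\frac{\gamma_i}N\nabla f_i(s_i+\gamma_iw^k)$, $\tilde s\leftarrow\tilde s+(v_i-s_i)$, $s_i\leftarrow v_i$. $\operatorname{prox}_{tg}(u)=\arg\min_w\{g(w)+\frac1{2t}\|w-u\|^2\}$.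 Essentially cyclic: there exists $T\ge1$ such that every $i$ belongs to at least one of $I^{k+1},\dots,I^{k+T}$ for every $k\ge0$. KL property with exponent $\theta$: for every $\bar w\in\operatorname{dom}\partial\Phi$ there are $\varepsilon,\eta,\varrho>0$ with $\psi'(\Phi(w)-\Phi(\bar w))\operatorname{dist}(0,\partial\Phi(w))\ge1$ whenever $\|w-\bar w\|<\varepsilon$ and $\Phi(\bar w)<\Phi(w)<\Phi(\bar w)+\eta$, $\psi(s)=\varrho s^{1-\theta}$, $\partial$ the limiting subdifferential. $\hat\partial$ is the regular subdifferential. *)

theory Defs
  imports "HOL-Analysis.Analysis"
begin

definition proper_fun :: "('a \<Rightarrow> ereal) \<Rightarrow> bool" where
  "proper_fun g \<longleftrightarrow> (\<forall>x. g x \<noteq> -\<infinity>) \<and> (\<exists>x. g x \<noteq> \<infinity>)"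

definition ereal_convex :: "('a::real_vector \<Rightarrow> ereal) \<Rightarrow> bool" where
  "ereal_convex g \<longleftrightarrow> (\<forall>x y (t::real). 0 < t \<and> t < 1 \<longrightarrow>
      g ((1 - t) *\<^sub>R x + t *\<^sub>R y) \<le> ereal (1 - t) * g x + ereal t * g y)"

text \<open>Lower semicontinuity (sequential form, equivalent in metric spaces).\<close>
definition lsc_fun :: "('a::metric_space \<Rightarrow> ereal) \<Rightarrow> bool" where
  "lsc_fun g \<longleftrightarrow> (\<forall>x X. X \<longlonglongrightarrow> x \<longrightarrow> g x \<le> liminf (\<lambda>k. g (X k)))"

definition prox :: "real \<Rightarrow> ('a::real_normed_vector \<Rightarrow> ereal) \<Rightarrow> 'a \<Rightarrow> 'a" where
  "prox t g u = (SOME w. \<forall>v. g w + ereal ((norm (w - u))\<^sup>2 / (2 * t))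
                             \<le> g v + ereal ((norm (v - u))\<^sup>2 / (2 * t)))"

definition reg_subdiff :: "('a::real_inner \<Rightarrow> ereal) \<Rightarrow> 'a \<Rightarrow> 'a set" where
  "reg_subdiff \<Phi> x = {v. \<bar>\<Phi> x\<bar> \<noteq> \<infinity> \<and>
     (\<forall>\<epsilon>>0. \<exists>\<delta>>0. \<forall>y. norm (y - x) < \<delta> \<longrightarrow>
         \<Phi> y \<ge> \<Phi> x + ereal (inner v (y - x) - \<epsilon> * norm (y - x)))}"

definition lim_subdiff :: "('a::real_inner \<Rightarrow> ereal) \<Rightarrow> 'a \<Rightarrow> 'a set" where
  "lim_subdiff \<Phi> x = {v. \<bar>\<Phi> x\<bar> \<noteq> \<infinity> \<and>
     (\<exists>X V. X \<longlonglongrightarrow> x \<and> (\<lambda>k. \<Phi> (X k)) \<longlonglongrightarrow> \<Phi> x \<and> V \<longlonglongrightarrow> v \<and>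
            (\<forall>k. V k \<in> reg_subdiff \<Phi> (X k)))}"

text \<open>KL property with exponent theta, desingularizing function psi(s) = rho s^(1-theta),
  psi'(s) = rho (1-theta) s^(-theta).  Convention dist(0, empty) = +infinity: the
  inequality is only required when the subdifferential is nonempty.\<close>
definition KL_exponent :: "('a::real_inner \<Rightarrow> ereal) \<Rightarrow> real \<Rightarrow> bool" where
  "KL_exponent \<Phi> \<theta> \<longleftrightarrow> (\<forall>wb. lim_subdiff \<Phi> wb \<noteq> {} \<longrightarrow>
     (\<exists>\<epsilon>>0. \<exists>\<eta>>0. \<exists>\<rho>>0. \<forall>w.
        norm (w - wb) < \<epsilon> \<and> \<Phi> wb < \<Phi> w \<and> \<Phi> w < \<Phi> wb + ereal \<eta> \<and> lim_subdiff \<Phi> w \<noteq> {}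
        \<longrightarrow> \<rho> * (1 - \<theta>) * (real_of_ereal (\<Phi> w - \<Phi> wb)) powr (- \<theta>)
              * infdist 0 (lim_subdiff \<Phi> w) \<ge> 1))"

definition sharing_obj ::
  "('N::finite \<Rightarrow> real^'n \<Rightarrow> real) \<Rightarrow> (real^'n \<Rightarrow> ereal) \<Rightarrow> real^'n^'N \<Rightarrow> ereal" where
  "sharing_obj f g x = ereal ((1 / real CARD('N)) * (\<Sum>i\<in>UNIV. f i (x $ i))) + g (\<Sum>i\<in>UNIV. x $ i)"

text \<open>The sharing algorithm. State (s, s~); gf i is the gradient of f i.\<close>
definition sharing_w :: "(real^'n \<Rightarrow> ereal) \<Rightarrow> real \<Rightarrow> real^'n \<Rightarrow> real^'n" where
  "sharing_w g gt st = (1 / gt) *\<^sub>R (prox gt g st - st)"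

fun sharing_state ::
  "('N::finite \<Rightarrow> real^'n \<Rightarrow> real^'n) \<Rightarrow> (real^'n \<Rightarrow> ereal) \<Rightarrow> ('N \<Rightarrow> real)
   \<Rightarrow> real^'n^'N \<Rightarrow> (nat \<Rightarrow> 'N set) \<Rightarrow> nat \<Rightarrow> (real^'n^'N) \<times> (real^'n)" where
  "sharing_state gf g \<gamma> xinit I 0 =
     (let s = (\<chi> i. xinit $ i - (\<gamma> i / real CARD('N)) *\<^sub>R gf i (xinit $ i))
      in (s, \<Sum>i\<in>UNIV. s $ i))"
| "sharing_state gf g \<gamma> xinit I (Suc k) =
     (let (s, st) = sharing_state gf g \<gamma> xinit I k;
          w = sharing_w g (\<Sum>i\<in>UNIV. \<gamma> i) st;
          v = (\<lambda>i. s $ i + \<gamma> i *\<^sub>R w - (\<gamma> i / real CARD('N)) *\<^sub>R gf i (s $ i + \<gamma> i *\<^sub>R w))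
      in ((\<chi> i. if i \<in> I (Suc k) then v i else s $ i),
          st + (\<Sum>i\<in>I (Suc k). v i - s $ i)))"

definition sharing_z ::
  "('N::finite \<Rightarrow> real^'n \<Rightarrow> real^'n) \<Rightarrow> (real^'n \<Rightarrow> ereal) \<Rightarrow> ('N \<Rightarrow> real)
   \<Rightarrow> real^'n^'N \<Rightarrow> (nat \<Rightarrow> 'N set) \<Rightarrow> nat \<Rightarrow> real^'n^'N" where
  "sharing_z gf g \<gamma> xinit I k =
     (let (s, st) = sharing_state gf g \<gamma> xinit I k;
          w = sharing_w g (\<Sum>i\<in>UNIV. \<gamma> i) st
      in (\<chi> i. s $ i + \<gamma> i *\<^sub>R w))"

definition essentially_cyclic :: "(nat \<Rightarrow> 'N::finite set) \<Rightarrow> bool" where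
  "essentially_cyclic I \<longleftrightarrow> (\<exists>T::nat. T \<ge> 1 \<and> (\<forall>k i. \<exists>t\<in>{1..T}. i \<in> I (k + t)))"

end

theory Submission
  imports Defs
begin

text \<open>The iterates are analysed through a Lyapunov function \<open>V\<close>: the value at \<open>z\<^sup>k\<close> of the
  separable quadratic majorizer of \<open>\<Phi>\<close> built from the gradients of the \<open>f\<^sub>i\<close> at the points where
  the blocks were last updated. \<open>V\<close> decreases by a multiple of the squared step, exceeds
  \<open>\<Phi>(z\<^sup>k)\<close> by at most the square of the lag between \<open>z\<^sup>k\<close> and the last update points, and that
  lag is bounded by the steps of one cyclic window. The optimality condition of the prox yields
  an explicit regular subgradient of \<open>\<Phi>\<close> at \<open>z\<^sup>k\<close> of size \<open>O(lag)\<close>, so every cluster point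
  is stationary and the KL inequality of \<open>\<Phi>\<close> there becomes a KL inequality for \<open>V\<close> with
  exponent \<open>max \<theta> (1/2)\<close>. The Attouch-Bolte argument then bounds the total step length by the
  desingularized Lyapunov gap, which gives convergence, and for exponent \<open>1/2\<close> a geometric
  decay of the gap over each window, which gives the R-linear rate.\<close>

section \<open>Lower semicontinuous and proper convex functions\<close>

lemma proper_fun_not_minf: "proper_fun g \<Longrightarrow> g x \<noteq> -\<infinity>"
  unfolding proper_fun_def by blast

lemma proper_fun_finite_point:
  assumes "proper_fun g"
  obtains x c where "g x = ereal c"
  using assms unfolding proper_fun_def by (metis ereal_cases)

lemma lsc_fun_le_lim:
  assumes "lsc_fun g" "X \<longlonglongrightarrow> x" "\<And>k. g (X k) \<le> ereal (y k)" "y \<longlonglongrightarrow> y0"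
  shows "g x \<le> ereal y0"
proof -
  have "g x \<le> liminf (\<lambda>k. g (X k))" using assms(1,2) unfolding lsc_fun_def by blast
  also have "\<dots> \<le> liminf (\<lambda>k. ereal (y k))" by (intro Liminf_mono) (simp add: assms(3))
  also have "\<dots> = ereal y0" by (intro lim_imp_Liminf) (simp_all add: assms(4))
  finally show ?thesis .
qed

lemma lsc_fun_add_continuous:
  fixes g :: "'a::metric_space \<Rightarrow> ereal" and q :: "'a \<Rightarrow> real"
  assumes "lsc_fun g" "continuous_on UNIV q"
  shows "lsc_fun (\<lambda>x. g x + ereal (q x))"
  unfolding lsc_fun_def
proof (intro allI impI)
  fix x :: 'a and X assume X: "X \<longlonglongrightarrow> x"
  have "(\<lambda>k. ereal (q (X k))) \<longlonglongrightarrow> ereal (q x)"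
    using continuous_on_tendsto_compose[OF assms(2) X] by (simp add: tendsto_ereal)
  then have "liminf (\<lambda>k. ereal (q (X k)) + g (X k)) = ereal (q x) + liminf (\<lambda>k. g (X k))"
    by (rule ereal_liminf_lim_add) simp
  moreover have "g x \<le> liminf (\<lambda>k. g (X k))" using assms(1) X unfolding lsc_fun_def by blast
  ultimately show "g x + ereal (q x) \<le> liminf (\<lambda>k. g (X k) + ereal (q (X k)))"
    by (simp only: add.commute[of "g _"] add_left_mono)
qed

lemma lsc_fun_attains_min_on_compact:
  fixes h :: "'a::metric_space \<Rightarrow> ereal"
  assumes lsc: "lsc_fun h" and K: "compact K" "K \<noteq> {}"
  shows "\<exists>l\<in>K. \<forall>v\<in>K. h l \<le> h v"
proof (cases "(INF v\<in>K. h v) = \<infinity>")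
  case True
  then have "h v = \<infinity>" if "v \<in> K" for v using INF_lower[OF that, of h] by simp
  then show ?thesis using K(2) by auto
next
  case False
  define m where "m = (INF v\<in>K. h v)"
  obtain e where e: "\<And>n. e n > m" "e \<longlonglongrightarrow> m"
    using approx_from_above_dense_linorder[of m \<infinity>] False unfolding m_def by (auto simp: less_top)
  have "\<forall>n. \<exists>v\<in>K. h v < e n" using e(1) unfolding m_def by (simp add: INF_less_iff)
  then obtain X where X: "\<And>n. X n \<in> K" "\<And>n. h (X n) < e n" by metis
  obtain l r where l: "l \<in> K" "strict_mono r" "(X \<circ> r) \<longlonglongrightarrow> l"
    using compact_imp_seq_compact[OF K(1)] X(1) seq_compactE by metis
  have "h l \<le> liminf (\<lambda>n. h ((X \<circ> r) n))" using lsc l(3) unfolding lsc_fun_def by blast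
  also have "\<dots> \<le> liminf (\<lambda>n. e (r n))" by (intro Liminf_mono) (simp add: X(2) less_imp_le)
  also have "\<dots> = m"
    using LIMSEQ_subseq_LIMSEQ[OF e(2) l(2)] by (intro lim_imp_Liminf) (simp_all add: o_def)
  finally have "h l \<le> m" .
  then show ?thesis using l(1) INF_lower[of _ K h] unfolding m_def by (blast intro: order_trans)
qed

lemma lsc_fun_bdd_below_on_compact:
  fixes g :: "'a::metric_space \<Rightarrow> ereal"
  assumes "lsc_fun g" "\<And>x. g x \<noteq> -\<infinity>" "compact K"
  shows "\<exists>m. \<forall>x\<in>K. ereal m \<le> g x"
proof (cases "K = {}")
  case False
  then obtain l where l: "l \<in> K" "\<forall>v\<in>K. g l \<le> g v"
    using lsc_fun_attains_min_on_compact[OF assms(1,3)] by blast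
  show ?thesis
  proof (cases "g l")
    case (real c) then show ?thesis using l(2) by auto
  next
    case PInf then show ?thesis using l(2) by (intro exI[of _ 0]) auto
  qed (use assms(2) in auto)
qed simp

lemma ereal_convex_norm_minorant_from_ball:
  assumes cv: "ereal_convex g" and nm: "\<And>x. g x \<noteq> -\<infinity>" and g0: "g x0 = ereal g0"
    and m: "\<forall>x\<in>cball x0 1. ereal m \<le> g x"
  shows "ereal (min m g0 - \<bar>g0 - m\<bar> * norm (u - x0)) \<le> g u"
proof (cases "norm (u - x0) \<le> 1")
  case True
  then have "ereal m \<le> g u" using m by (simp add: dist_norm norm_minus_commute)
  moreover have "min m g0 - \<bar>g0 - m\<bar> * norm (u - x0) \<le> m"
    using mult_nonneg_nonneg[OF abs_ge_zero norm_ge_zero, of "g0 - m" "u - x0"] by linarith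
  ultimately show ?thesis by (meson ereal_less_eq(3) order_trans)
next
  case False
  define d where "d = norm (u - x0)"
  have d1: "d > 1" using False d_def by simp
  define t where "t = 1 / d"
  have t: "0 < t" "t < 1" using d1 t_def by auto
  define p where "p = (1 - t) *\<^sub>R x0 + t *\<^sub>R u"
  have "p - x0 = t *\<^sub>R (u - x0)" unfolding p_def by (simp add: algebra_simps)
  then have "norm (x0 - p) = 1" using t d1 unfolding t_def d_def by (simp add: norm_minus_commute)
  then have "ereal m \<le> g p" using m by (simp add: dist_norm)
  also have "g p \<le> ereal (1 - t) * g x0 + ereal t * g u"
    using cv t unfolding ereal_convex_def p_def by blast
  finally have mp: "ereal m \<le> ereal (1 - t) * g x0 + ereal t * g u" .
  show ?thesis
  proof (cases "g u")
    case (real gu)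
    with mp g0 have "m \<le> (1 - t) * g0 + t * gu" by simp
    then have "m * d \<le> ((1 - t) * g0 + t * gu) * d" using d1 by (intro mult_right_mono) auto
    also have "((1 - t) * g0 + t * gu) * d = (d - 1) * g0 + gu"
      using d1 unfolding t_def by (simp add: field_simps)
    finally have "gu \<ge> g0 + d * (m - g0)" by (simp add: algebra_simps)
    moreover have "d * (m - g0) \<ge> - \<bar>g0 - m\<bar> * d"
      using d1 mult_right_mono[of "- \<bar>g0 - m\<bar>" "m - g0" d] by (simp add: mult.commute)
    ultimately have "min m g0 - \<bar>g0 - m\<bar> * d \<le> gu" by linarith
    then show ?thesis using real d_def by simp
  qed (use nm in auto)
qed

lemma proper_convex_lsc_norm_minorant:
  fixes g :: "'a::{real_normed_vector,heine_borel} \<Rightarrow> ereal"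
  assumes pr: "proper_fun g" and cv: "ereal_convex g" and lsc: "lsc_fun g"
  shows "\<exists>A B. B \<ge> 0 \<and> (\<forall>u. ereal (A - B * norm u) \<le> g u)"
proof -
  obtain x0 g0 where g0: "g x0 = ereal g0" using proper_fun_finite_point[OF pr] .
  have nm: "\<And>x. g x \<noteq> -\<infinity>" using proper_fun_not_minf[OF pr] .
  obtain m where m: "\<forall>x\<in>cball x0 1. ereal m \<le> g x"
    using lsc_fun_bdd_below_on_compact[OF lsc nm compact_cball] by blast
  define B where "B = \<bar>g0 - m\<bar>"
  have "ereal (min m g0 - B * norm x0 - B * norm u) \<le> g u" for u
  proof -
    have "B * norm (u - x0) \<le> B * norm u + B * norm x0"
      unfolding B_def by (metis abs_ge_zero distrib_left mult_left_mono norm_triangle_ineq4)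
    then have "min m g0 - B * norm x0 - B * norm u \<le> min m g0 - B * norm (u - x0)" by linarith
    then show ?thesis using ereal_convex_norm_minorant_from_ball[OF cv nm g0 m, of u] unfolding B_def
      by (meson ereal_less_eq(3) order_trans)
  qed
  moreover have "B \<ge> 0" unfolding B_def by simp
  ultimately show ?thesis by blast
qed

section \<open>The proximal map\<close>

lemma quadratic_dominates_norm:
  fixes u :: "'a::real_normed_vector"
  assumes "B \<ge> 0" "t > 0"
  shows "\<exists>R. \<forall>v. R < norm (v - u) \<longrightarrow> c < A - B * norm v + (norm (v - u))\<^sup>2 / (2 * t)"
proof -
  define c' where "c' = c - A + B * norm u"
  define R where "R = max 1 (2 * t * (B + \<bar>c'\<bar> + 1))"
  have "c < A - B * norm v + (norm (v - u))\<^sup>2 / (2 * t)" if "R < norm (v - u)" for v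
  proof -
    define d where "d = norm (v - u)"
    have d: "d > R" "d \<ge> 1" using that R_def d_def by auto
    have "B * norm v \<le> d * B + B * norm u"
      using mult_left_mono[OF norm_triangle_sub[of v u] assms(1)] unfolding d_def
      by (simp add: distrib_left mult.commute)
    moreover have "d * (2 * t * (B + \<bar>c'\<bar> + 1)) \<le> d * d" using d R_def by (intro mult_left_mono) auto
    then have "d * (B + \<bar>c'\<bar> + 1) \<le> d\<^sup>2 / (2 * t)" using assms(2) by (simp add: field_simps power2_eq_square)
    moreover have "\<bar>c'\<bar> + 1 \<le> d * (\<bar>c'\<bar> + 1)" using mult_right_mono[of 1 d "\<bar>c'\<bar> + 1"] d by simp
    moreover have "d * (B + \<bar>c'\<bar> + 1) = d * B + d * (\<bar>c'\<bar> + 1)" by (simp add: algebra_simps)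
    moreover have "c' \<le> \<bar>c'\<bar>" by simp
    ultimately have "c < A - B * norm v + d\<^sup>2 / (2 * t)" using c'_def by linarith
    then show ?thesis unfolding d_def .
  qed
  then show ?thesis by blast
qed

lemma prox_argmin_exists:
  fixes g :: "'a::euclidean_space \<Rightarrow> ereal"
  assumes pr: "proper_fun g" and cv: "ereal_convex g" and lsc: "lsc_fun g" and t: "t > 0"
  shows "\<exists>w. \<forall>v. g w + ereal ((norm (w - u))\<^sup>2 / (2 * t)) \<le> g v + ereal ((norm (v - u))\<^sup>2 / (2 * t))"
proof -
  define q where "q v = (norm (v - u))\<^sup>2 / (2 * t)" for v
  define h where "h v = g v + ereal (q v)" for v
  obtain x0 g0 where g0: "g x0 = ereal g0" using proper_fun_finite_point[OF pr] .
  obtain A B where AB: "B \<ge> 0" "\<And>u. ereal (A - B * norm u) \<le> g u"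
    using proper_convex_lsc_norm_minorant[OF pr cv lsc] by blast
  obtain R where R: "\<And>v. R < norm (v - u) \<Longrightarrow> g0 + q x0 < A - B * norm v + q v"
    using quadratic_dominates_norm[OF AB(1) t, where u = u and c = "g0 + q x0" and A = A]
    unfolding q_def by blast
  have far: "h x0 < h v" if "R < norm (v - u)" for v
  proof -
    have "h x0 < ereal (A - B * norm v + q v)" using R[OF that] g0 unfolding h_def by simp
    also have "\<dots> \<le> h v" using AB(2)[of v] unfolding h_def by (cases "g v") auto
    finally show ?thesis .
  qed
  define K where "K = cball u (max R (norm (x0 - u)))"
  have x0K: "x0 \<in> K" unfolding K_def by (simp add: dist_norm norm_minus_commute)
  have "continuous_on UNIV q" unfolding q_def by (intro continuous_intros) (use t in auto)
  then have "lsc_fun h" unfolding h_def by (intro lsc_fun_add_continuous lsc)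
  moreover have "compact K" "K \<noteq> {}" using x0K unfolding K_def by auto
  ultimately have "\<exists>l\<in>K. \<forall>v\<in>K. h l \<le> h v" by (rule lsc_fun_attains_min_on_compact)
  then obtain l where l: "l \<in> K" "\<And>v. v \<in> K \<Longrightarrow> h l \<le> h v" by blast
  have "h l \<le> h v" for v
  proof (cases "v \<in> K")
    case False
    then have "R < norm (v - u)" unfolding K_def by (simp add: dist_norm norm_minus_commute)
    then show ?thesis using l(2)[OF x0K] far by (meson less_imp_le order_trans)
  qed (rule l(2))
  then show ?thesis unfolding h_def q_def by blast
qed

lemma prox_minimizes:
  fixes g :: "'a::euclidean_space \<Rightarrow> ereal"
  assumes "proper_fun g" "ereal_convex g" "lsc_fun g" "t > 0"
  shows "g (prox t g s) + ereal ((norm (prox t g s - s))\<^sup>2 / (2 * t))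
           \<le> g v + ereal ((norm (v - s))\<^sup>2 / (2 * t))"
  using someI_ex[OF prox_argmin_exists[OF assms, of s]] unfolding prox_def by blast

lemma norm_add_scaleR_power2:
  fixes a b :: "'a::real_inner"
  shows "(norm (a + \<tau> *\<^sub>R b))\<^sup>2 = (norm a)\<^sup>2 + 2 * \<tau> * inner a b + \<tau>\<^sup>2 * (norm b)\<^sup>2"
  by (simp only: power2_norm_eq_inner)
    (simp add: inner_add_left inner_add_right inner_commute algebra_simps power2_eq_square)

lemma le_0_if_le_small_multiples:
  fixes x C :: real
  assumes "\<And>\<tau>. 0 < \<tau> \<Longrightarrow> \<tau> < 1 \<Longrightarrow> x \<le> \<tau> * C" "0 \<le> C"
  shows "x \<le> 0"
proof (rule field_le_epsilon)
  fix e :: real assume e: "0 < e"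
  define \<tau> where "\<tau> = min (1/2) (e / (C + 1))"
  have \<tau>: "0 < \<tau>" "\<tau> < 1" unfolding \<tau>_def using e assms(2) by auto
  have "\<tau> * C \<le> e / (C + 1) * C" unfolding \<tau>_def using assms(2) by (intro mult_right_mono) auto
  also have "\<dots> \<le> e" using e assms(2) by (simp add: field_simps)
  finally show "x \<le> 0 + e" using assms(1)[OF \<tau>] by simp
qed

text \<open>Compare the proximal objective at \<open>prox t g s\<close> with its value at
  \<open>(1 - \<tau>) prox t g s + \<tau> v\<close>.\<close>
lemma prox_convex_combination_bound:
  fixes g :: "'a::euclidean_space \<Rightarrow> ereal"
  assumes pr: "proper_fun g" and cv: "ereal_convex g" and lsc: "lsc_fun g" and t: "t > 0"
    and P: "g (prox t g s) = ereal P" and G: "g v = ereal G" and \<tau>: "0 < \<tau>" "\<tau> < 1"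
  shows "P - G - inner (prox t g s - s) (v - prox t g s) / t \<le> \<tau> * ((norm (v - prox t g s))\<^sup>2 / (2 * t))"
proof -
  define p where "p = prox t g s"
  define d where "d = v - p"
  define q where "q v = (norm (v - s))\<^sup>2 / (2 * t)" for v
  define pt where "pt = (1 - \<tau>) *\<^sub>R p + \<tau> *\<^sub>R v"
  have "g pt \<le> ereal (1 - \<tau>) * g p + ereal \<tau> * g v"
    using cv \<tau> unfolding ereal_convex_def pt_def by blast
  then have gpt: "g pt \<le> ereal ((1 - \<tau>) * P + \<tau> * G)" using P G unfolding p_def by simp
  have "ereal (P + q p) \<le> g pt + ereal (q pt)"
    using prox_minimizes[OF pr cv lsc t, of s pt] P unfolding p_def q_def by simp
  also have "\<dots> \<le> ereal ((1 - \<tau>) * P + \<tau> * G) + ereal (q pt)" using gpt by (rule add_right_mono)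
  finally have ineq: "P + q p \<le> (1 - \<tau>) * P + \<tau> * G + q pt" by simp
  have "pt - s = (p - s) + \<tau> *\<^sub>R d" unfolding pt_def d_def by (simp add: algebra_simps)
  then have "q pt = ((norm (p - s))\<^sup>2 + 2 * \<tau> * inner (p - s) d + \<tau>\<^sup>2 * (norm d)\<^sup>2) / (2 * t)"
    unfolding q_def by (simp only: norm_add_scaleR_power2)
  then have "q pt - q p = \<tau> * (inner (p - s) d / t) + \<tau> * (\<tau> * ((norm d)\<^sup>2 / (2 * t)))"
    unfolding q_def using t by (simp add: field_simps power2_eq_square)
  then have "\<tau> * (P - G - inner (p - s) d / t) \<le> \<tau> * (\<tau> * ((norm d)\<^sup>2 / (2 * t)))"
    using ineq by (simp add: algebra_simps)
  then show ?thesis using \<tau>(1) unfolding p_def d_def by (rule mult_left_le_imp_le)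
qed

lemma prox_subgradient_ineq:
  fixes g :: "'a::euclidean_space \<Rightarrow> ereal"
  assumes pr: "proper_fun g" and cv: "ereal_convex g" and lsc: "lsc_fun g" and t: "t > 0"
  shows "\<exists>P. g (prox t g s) = ereal P \<and>
     (\<forall>v. ereal (P + inner ((1/t) *\<^sub>R (s - prox t g s)) (v - prox t g s)) \<le> g v)"
proof -
  define p where "p = prox t g s"
  have nm: "\<And>x. g x \<noteq> -\<infinity>" using proper_fun_not_minf[OF pr] .
  obtain x0 g0 where "g x0 = ereal g0" using proper_fun_finite_point[OF pr] .
  then have "g p \<noteq> \<infinity>"
    using prox_minimizes[OF pr cv lsc t, of s x0] nm unfolding p_def by (cases "g p") auto
  then obtain P where P: "g p = ereal P" using nm by (cases "g p") auto
  have "ereal (P + inner ((1/t) *\<^sub>R (s - p)) (v - p)) \<le> g v" for v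
  proof (cases "g v")
    case (real G)
    have "P - G - inner (p - s) (v - p) / t \<le> 0"
    proof (rule le_0_if_le_small_multiples)
      show "P - G - inner (p - s) (v - p) / t \<le> \<tau> * ((norm (v - p))\<^sup>2 / (2 * t))" if "0 < \<tau>" "\<tau> < 1" for \<tau>
        using prox_convex_combination_bound[OF pr cv lsc t P[unfolded p_def] real that] unfolding p_def .
    qed (use t in simp)
    moreover have "inner ((1/t) *\<^sub>R (s - p)) (v - p) = - (inner (p - s) (v - p) / t)"
      by (simp add: inner_diff_left) (metis minus_diff_eq minus_divide_left)
    ultimately show ?thesis using real by simp
  qed (use nm in auto)
  then show ?thesis using P unfolding p_def by blast
qed

section \<open>Smooth functions and subdifferentials\<close>

lemma has_real_derivative_along_line:
  fixes f :: "'a::real_inner \<Rightarrow> real"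
  assumes fd: "\<And>x. (f has_derivative (\<lambda>h. inner (gf x) h)) (at x)"
  shows "((\<lambda>\<tau>. f (x + \<tau> *\<^sub>R h)) has_real_derivative inner (gf (x + \<tau> *\<^sub>R h)) h) (at \<tau>)"
proof -
  have l: "((\<lambda>\<tau>::real. x + \<tau> *\<^sub>R h) has_derivative (\<lambda>s. s *\<^sub>R h)) (at \<tau>)"
    by (auto intro!: derivative_eq_intros)
  have "((\<lambda>\<tau>. f (x + \<tau> *\<^sub>R h)) has_derivative (\<lambda>s. inner (gf (x + \<tau> *\<^sub>R h)) (s *\<^sub>R h))) (at \<tau>)"
    using has_derivative_compose[OF l fd] .
  then show ?thesis unfolding has_field_derivative_def
    by (rule has_derivative_eq_rhs) (auto simp: fun_eq_iff)
qed

lemma lipschitz_gradient_quadratic_bound: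
  fixes f :: "'a::real_inner \<Rightarrow> real"
  assumes fd: "\<And>x. (f has_derivative (\<lambda>h. inner (gf x) h)) (at x)"
    and lip: "\<And>x y. norm (gf x - gf y) \<le> L * norm (x - y)"
  shows "\<bar>f y - f x - inner (gf x) (y - x)\<bar> \<le> L / 2 * (norm (y - x))\<^sup>2"
proof -
  define h where "h = y - x"
  have bnd: "\<bar>inner (gf (x + \<tau> *\<^sub>R h)) h - inner (gf x) h\<bar> \<le> L * \<tau> * (norm h)\<^sup>2" if "0 \<le> \<tau>" for \<tau>
  proof -
    have "\<bar>inner (gf (x + \<tau> *\<^sub>R h)) h - inner (gf x) h\<bar> = \<bar>inner (gf (x + \<tau> *\<^sub>R h) - gf x) h\<bar>"
      by (simp add: inner_diff_left)
    also have "\<dots> \<le> norm (gf (x + \<tau> *\<^sub>R h) - gf x) * norm h" by (rule Cauchy_Schwarz_ineq2)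
    also have "\<dots> \<le> L * norm (\<tau> *\<^sub>R h) * norm h" using lip[of "x + \<tau> *\<^sub>R h" x] by (simp add: mult_right_mono)
    also have "\<dots> = L * \<tau> * (norm h)\<^sup>2" using that by (simp add: power2_eq_square)
    finally show ?thesis .
  qed
  define c where "c = inner (gf x) h"
  define n2 where "n2 = (norm h)\<^sup>2"
  define \<phi> where "\<phi> \<tau> = f (x + \<tau> *\<^sub>R h) - \<tau> * c - L / 2 * \<tau>\<^sup>2 * n2" for \<tau>
  define \<psi> where "\<psi> \<tau> = f (x + \<tau> *\<^sub>R h) - \<tau> * c + L / 2 * \<tau>\<^sup>2 * n2" for \<tau>
  have d\<phi>: "(\<phi> has_real_derivative inner (gf (x + \<tau> *\<^sub>R h)) h - c - L * \<tau> * n2) (at \<tau>)" for \<tau>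
    unfolding \<phi>_def by (rule derivative_eq_intros has_real_derivative_along_line[OF fd] | simp)+
  have d\<psi>: "(\<psi> has_real_derivative inner (gf (x + \<tau> *\<^sub>R h)) h - c + L * \<tau> * n2) (at \<tau>)" for \<tau>
    unfolding \<psi>_def by (rule derivative_eq_intros has_real_derivative_along_line[OF fd] | simp)+
  have "\<phi> 1 \<le> \<phi> 0"
  proof (rule DERIV_nonpos_imp_nonincreasing[of 0 1])
    fix \<tau> :: real assume "0 \<le> \<tau>" "\<tau> \<le> 1"
    then show "\<exists>y. DERIV \<phi> \<tau> :> y \<and> y \<le> 0" using d\<phi>[of \<tau>] bnd[of \<tau>] unfolding c_def n2_def
      by (intro exI[of _ "inner (gf (x + \<tau> *\<^sub>R h)) h - c - L * \<tau> * n2"]) (auto simp: c_def n2_def)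
  qed simp
  moreover have "\<psi> 0 \<le> \<psi> 1"
  proof (rule DERIV_nonneg_imp_nondecreasing[of 0 1])
    fix \<tau> :: real assume "0 \<le> \<tau>" "\<tau> \<le> 1"
    then show "\<exists>y. DERIV \<psi> \<tau> :> y \<and> y \<ge> 0" using d\<psi>[of \<tau>] bnd[of \<tau>] unfolding c_def n2_def
      by (intro exI[of _ "inner (gf (x + \<tau> *\<^sub>R h)) h - c + L * \<tau> * n2"]) (auto simp: c_def n2_def)
  qed simp
  ultimately have "f y - f x - inner (gf x) (y - x) \<le> L / 2 * (norm (y - x))\<^sup>2"
      "- (f y - f x - inner (gf x) (y - x)) \<le> L / 2 * (norm (y - x))\<^sup>2"
    unfolding \<phi>_def \<psi>_def c_def n2_def h_def by (simp_all add: algebra_simps)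
  then show ?thesis unfolding abs_le_iff by blast
qed

lemma reg_subdiff_of_quadratic_minorant:
  fixes \<Phi> :: "'a::real_inner \<Rightarrow> ereal"
  assumes p: "\<Phi> x0 = ereal p" and q: "\<And>x. ereal (p + inner v (x - x0) - C * (norm (x - x0))\<^sup>2) \<le> \<Phi> x"
    and C: "C \<ge> 0"
  shows "v \<in> reg_subdiff \<Phi> x0"
  unfolding reg_subdiff_def
proof (intro CollectI conjI allI impI)
  show "\<bar>\<Phi> x0\<bar> \<noteq> \<infinity>" using p by simp
  fix \<epsilon> :: real assume e: "\<epsilon> > 0"
  show "\<exists>\<delta>>0. \<forall>y. norm (y - x0) < \<delta> \<longrightarrow> \<Phi> x0 + ereal (inner v (y - x0) - \<epsilon> * norm (y - x0)) \<le> \<Phi> y"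
  proof (intro exI conjI allI impI)
    show "\<epsilon> / (C + 1) > 0" using e C by simp
    fix y assume y: "norm (y - x0) < \<epsilon> / (C + 1)"
    define d where "d = norm (y - x0)"
    have "C * d\<^sup>2 = (C * d) * d" by (simp add: power2_eq_square)
    also have "\<dots> \<le> (C * (\<epsilon> / (C + 1))) * d" using y C unfolding d_def
      by (intro mult_right_mono mult_left_mono) auto
    also have "\<dots> \<le> \<epsilon> * d" using C e unfolding d_def by (intro mult_right_mono) (auto simp: field_simps)
    finally have "p + inner v (y - x0) - \<epsilon> * d \<le> p + inner v (y - x0) - C * d\<^sup>2" by simp
    then have "ereal (p + inner v (y - x0) - \<epsilon> * d) \<le> \<Phi> y" using q[of y] unfolding d_def
      by (meson ereal_less_eq(3) order_trans)
    then show "\<Phi> x0 + ereal (inner v (y - x0) - \<epsilon> * norm (y - x0)) \<le> \<Phi> y" unfolding p d_def by (simp add: add_diff_eq)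
  qed
qed

lemma reg_subdiff_imp_lim_subdiff: "v \<in> reg_subdiff \<Phi> x \<Longrightarrow> v \<in> lim_subdiff \<Phi> x"
  unfolding lim_subdiff_def
  by (rule CollectI, rule conjI, simp add: reg_subdiff_def, rule exI[of _ "\<lambda>k. x"], rule exI[of _ "\<lambda>k. v"]) auto

definition KL_ineq_near :: "('a::real_inner \<Rightarrow> ereal) \<Rightarrow> real \<Rightarrow> 'a \<Rightarrow> real \<Rightarrow> real \<Rightarrow> real \<Rightarrow> bool"
  where "KL_ineq_near \<Phi> \<theta> wb \<epsilon> \<eta> \<rho> \<longleftrightarrow> (\<forall>w.
    norm (w - wb) < \<epsilon> \<and> \<Phi> wb < \<Phi> w \<and> \<Phi> w < \<Phi> wb + ereal \<eta> \<and> lim_subdiff \<Phi> w \<noteq> {}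
    \<longrightarrow> \<rho> * (1 - \<theta>) * (real_of_ereal (\<Phi> w - \<Phi> wb)) powr (- \<theta>) * infdist 0 (lim_subdiff \<Phi> w) \<ge> 1)"

lemma KL_exponentD:
  "KL_exponent \<Phi> \<theta> \<Longrightarrow> lim_subdiff \<Phi> wb \<noteq> {} \<Longrightarrow> \<exists>\<epsilon>>0. \<exists>\<eta>>0. \<exists>\<rho>>0. KL_ineq_near \<Phi> \<theta> wb \<epsilon> \<eta> \<rho>"
  unfolding KL_exponent_def KL_ineq_near_def by blast

section \<open>An abstract KL convergence argument\<close>

lemma powr_tangent_ineq:
  fixes a b \<beta> :: real
  assumes "0 \<le> b" "b \<le> a" "0 < a" "0 < \<beta>" "\<beta> < 1"
  shows "\<beta> * a powr (\<beta> - 1) * (a - b) \<le> a powr \<beta> - b powr \<beta>"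
proof (cases "b = 0")
  case True
  have "a powr (\<beta> - 1) * a = a powr \<beta>" using assms by (simp add: powr_diff)
  then have "\<beta> * a powr (\<beta> - 1) * (a - b) = \<beta> * a powr \<beta>" using True by (simp add: algebra_simps)
  also have "\<dots> \<le> a powr \<beta>" using assms by (simp add: mult_le_cancel_right1)
  finally show ?thesis using True by simp
next
  case False
  then have b: "0 < b" using assms by simp
  show ?thesis
  proof (cases "b = a")
    case True then show ?thesis by simp
  next
    case False
    then have ba: "b < a" using assms by simp
    have "\<exists>z>b. z < a \<and> a powr \<beta> - b powr \<beta> = (a - b) * (\<beta> * z powr (\<beta> - 1))"
      using ba b by (intro MVT2) (auto intro!: has_real_derivative_powr)
    then obtain \<xi> where \<xi>: "b < \<xi>" "\<xi> < a" "a powr \<beta> - b powr \<beta> = (a - b) * (\<beta> * \<xi> powr (\<beta> - 1))"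
      by blast
    have "a powr (\<beta> - 1) \<le> \<xi> powr (\<beta> - 1)" using \<xi> b assms
      by (intro powr_mono2') auto
    then have "\<beta> * a powr (\<beta> - 1) * (a - b) \<le> \<beta> * \<xi> powr (\<beta> - 1) * (a - b)"
      using assms ba by (intro mult_right_mono mult_left_mono) auto
    then show ?thesis using \<xi>(3) by (simp add: algebra_simps)
  qed
qed

lemma power2_powr_le_self:
  fixes D \<alpha> :: real
  assumes "0 \<le> D" "D \<le> 1" "1 \<le> 2 * \<alpha>"
  shows "(D\<^sup>2) powr \<alpha> \<le> D"
proof (cases "D = 0")
  case False
  then have "(D\<^sup>2) powr \<alpha> = D powr (2 * \<alpha>)"
    using assms(1) by (simp add: powr_powr[symmetric] powr_realpow)
  also have "\<dots> \<le> D powr 1" using False assms by (intro powr_mono') auto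
  finally show ?thesis using False assms(1) by simp
qed simp

lemma powr_add_le:
  fixes a b \<alpha> :: real
  assumes "0 \<le> a" "0 \<le> b" "0 < \<alpha>" "\<alpha> \<le> 1"
  shows "(a + b) powr \<alpha> \<le> 2 * (a powr \<alpha> + b powr \<alpha>)"
proof -
  have "(a + b) powr \<alpha> \<le> (2 * max a b) powr \<alpha>" using assms by (intro powr_mono2) auto
  also have "\<dots> = 2 powr \<alpha> * max a b powr \<alpha>" using assms by (simp add: powr_mult)
  also have "\<dots> \<le> 2 * (a powr \<alpha> + b powr \<alpha>)"
  proof (rule mult_mono)
    show "2 powr \<alpha> \<le> 2" using assms powr_mono[of \<alpha> 1 2] by simp
    show "max a b powr \<alpha> \<le> a powr \<alpha> + b powr \<alpha>" by (cases "a \<le> b") (auto simp: max_def)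
  qed auto
  finally show ?thesis .
qed

lemma sum_window_telescope:
  fixes a :: "nat \<Rightarrow> real"
  shows "(\<Sum>j<n. a (k + j) - a (k + j + T)) = (\<Sum>t<T. a (k + t)) - (\<Sum>t<T. a (k + n + t))"
proof (induction n)
  case 0 then show ?case by simp
next
  case (Suc n)
  have "(\<Sum>t<T. a (k + n + t)) - (\<Sum>t<T. a (k + Suc n + t)) = (\<Sum>t<T. a (k + n + t) - a (k + n + Suc t))"
    by (simp add: sum_subtractf)
  also have "\<dots> = a (k + n) - a (k + n + T)"
    using sum_lessThan_telescope'[of "\<lambda>t. a (k + n + t)" T] by simp
  finally show ?case using Suc by (simp add: algebra_simps)
qed

lemma dist_le_sum_of_steps:
  fixes z :: "nat \<Rightarrow> 'a::metric_space"
  assumes "\<And>k. dist (z (Suc k)) (z k) \<le> \<Delta> k"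
  shows "dist (z (k + n)) (z k) \<le> (\<Sum>j<n. \<Delta> (k + j))"
proof (induction n)
  case 0 then show ?case by simp
next
  case (Suc n)
  have "dist (z (k + Suc n)) (z k) \<le> dist (z (Suc (k + n))) (z (k + n)) + dist (z (k + n)) (z k)"
    using dist_triangle by simp
  also have "\<dots> \<le> \<Delta> (k + n) + (\<Sum>j<n. \<Delta> (k + j))" using assms Suc by (intro add_mono) auto
  finally show ?case by (simp add: add.commute)
qed

lemma power_mult_div_le:
  fixes \<rho> :: real
  assumes "0 < \<rho>" "\<rho> \<le> 1" "T \<ge> 1"
  shows "\<rho> ^ (T * (n div T)) \<le> \<rho> ^ n / \<rho> ^ T"
proof -
  have "n = T * (n div T) + n mod T" by simp
  moreover have "n mod T < T" using assms(3) by simp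
  ultimately have "n \<le> T * (n div T) + T" by linarith
  then have "\<rho> ^ (T * (n div T) + T) \<le> \<rho> ^ n" using assms by (intro power_decreasing) auto
  then show ?thesis using assms by (simp add: power_add field_simps)
qed

lemma geometric_bound_from_tail:
  fixes a :: "nat \<Rightarrow> real"
  assumes "0 < \<rho>" "0 \<le> A" "\<And>n. a (K + n) \<le> A * \<rho> ^ (K + n)"
  shows "\<exists>C. \<forall>k. a k \<le> C * \<rho> ^ k"
proof -
  define C where "C = A + (\<Sum>k<K. \<bar>a k\<bar> / \<rho> ^ k)"
  have "a k \<le> C * \<rho> ^ k" for k
  proof (cases "K \<le> k")
    case True
    have "a k \<le> A * \<rho> ^ k" using assms(3)[of "k - K"] True by simp
    also have "\<dots> \<le> C * \<rho> ^ k" unfolding C_def using assms(1)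
      by (intro mult_right_mono) (auto intro!: sum_nonneg)
    finally show ?thesis .
  next
    case False
    have "\<bar>a k\<bar> / \<rho> ^ k \<le> (\<Sum>k<K. \<bar>a k\<bar> / \<rho> ^ k)"
      using False assms(1) by (intro member_le_sum) auto
    then have "\<bar>a k\<bar> / \<rho> ^ k \<le> C" unfolding C_def using assms(2) by linarith
    then show ?thesis using assms(1) by (simp add: field_simps)
  qed
  then show ?thesis by blast
qed

lemma subseq_limit_frequently_near:
  fixes z :: "nat \<Rightarrow> 'a::metric_space"
  assumes \<phi>: "strict_mono \<phi>" and lim: "(\<lambda>j. z (\<phi> j)) \<longlonglongrightarrow> xs" and \<delta>: "\<delta> > 0"
  shows "\<exists>k\<ge>K. dist (z k) xs < \<delta>"
proof -
  obtain n where n: "\<forall>m\<ge>n. dist (z (\<phi> m)) xs < \<delta>" using lim \<delta> unfolding lim_sequentially by blast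
  have "K \<le> \<phi> (max n K)" using seq_suble[OF \<phi>, of "max n K"] by simp
  then show ?thesis using n by (intro exI[of _ "\<phi> (max n K)"]) auto
qed

lemma Cauchy_if_tail_dist_bound:
  fixes z :: "nat \<Rightarrow> 'a::metric_space"
  assumes "\<And>k n. k \<ge> K \<Longrightarrow> dist (z (k + n)) (z k) \<le> b k" "b \<longlonglongrightarrow> 0"
  shows "Cauchy z"
  unfolding Cauchy_altdef2
proof (intro allI impI)
  fix e :: real assume "e > 0"
  then obtain K1 where K1: "\<And>k. k \<ge> K1 \<Longrightarrow> b k < e"
    using assms(2) order_tendstoD(2)[of b 0 sequentially e] unfolding eventually_sequentially by blast
  show "\<exists>N. \<forall>n\<ge>N. dist (z n) (z N) < e"
  proof (intro exI allI impI)
    fix n assume n: "n \<ge> max K K1"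
    have "dist (z (max K K1 + (n - max K K1))) (z (max K K1)) \<le> b (max K K1)" by (intro assms(1)) simp
    then show "dist (z n) (z (max K K1)) < e" using K1[of "max K K1"] n by simp
  qed
qed

lemma LIMSEQ_cluster_point_unique:
  fixes z :: "nat \<Rightarrow> 'a::metric_space"
  assumes lim: "z \<longlonglongrightarrow> l" and cl: "\<And>K \<delta>. \<delta> > 0 \<Longrightarrow> \<exists>k\<ge>K. dist (z k) xs < \<delta>"
  shows "l = xs"
proof -
  have "dist l xs \<le> e" if e: "e > 0" for e
  proof -
    obtain N where N: "\<And>n. n \<ge> N \<Longrightarrow> dist (z n) l < e / 2"
      using lim e unfolding lim_sequentially by (metis half_gt_zero)
    obtain k where k: "k \<ge> N" "dist (z k) xs < e / 2" using cl[of "e/2" N] e by auto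
    show ?thesis using N[OF k(1)] k(2) dist_triangle3[of l xs "z k"] by linarith
  qed
  then show ?thesis by (metis dist_le_zero_iff field_le_epsilon add_0)
qed

lemma dist_limit_le_tail_bound:
  fixes z :: "nat \<Rightarrow> 'a::metric_space"
  assumes "z \<longlonglongrightarrow> xs" "\<And>n. dist (z (k + n)) (z k) \<le> b"
  shows "dist (z k) xs \<le> b"
proof -
  have "(\<lambda>n. dist (z (n + k)) (z k)) \<longlonglongrightarrow> dist xs (z k)"
    using LIMSEQ_ignore_initial_segment[OF assms(1), of k] by (intro tendsto_intros)
  then have "dist xs (z k) \<le> b" by (rule LIMSEQ_le_const2) (use assms(2) in \<open>auto simp: add.commute\<close>)
  then show ?thesis by (simp add: dist_commute)
qed

locale kl_descent_sequence =
  fixes z :: "nat \<Rightarrow> 'a::complete_space" and xs :: 'a and r \<Delta> D :: "nat \<Rightarrow> real"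
    and c C1 B \<alpha> \<epsilon> :: real and T K0 :: nat
  assumes r0: "\<And>k. 0 \<le> r k" and rlim: "r \<longlonglongrightarrow> 0"
    and dec: "\<And>k. c * (\<Delta> k)\<^sup>2 \<le> r k - r (Suc k)" and c: "c > 0"
    and \<Delta>0: "\<And>k. 0 \<le> \<Delta> k" and dz: "\<And>k. dist (z (Suc k)) (z k) \<le> \<Delta> k"
    and Dle: "\<And>k. D k \<le> C1 * (\<Sum>j<T. \<Delta> (k + j))" and T: "T \<ge> 1" and C1: "C1 > 0"
    and cl: "\<And>K \<delta>. \<delta> > 0 \<Longrightarrow> \<exists>k\<ge>K. dist (z k) xs < \<delta>"
    and \<alpha>: "0 < \<alpha>" "\<alpha> < 1" and \<epsilon>: "\<epsilon> > 0" and B: "B > 0"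
    and kl: "\<And>k. k \<ge> K0 \<Longrightarrow> dist (z k) xs < \<epsilon> \<Longrightarrow> r k powr \<alpha> \<le> B * D k"
begin

definition near :: "nat \<Rightarrow> bool" where "near k \<longleftrightarrow> k \<ge> K0 \<and> dist (z k) xs < \<epsilon>"

definition \<phi> :: "real \<Rightarrow> real" where "\<phi> x = x powr (1 - \<alpha>)"

definition M :: real where "M = real T * B * C1 / (c * (1 - \<alpha>))"

lemma r_Suc_le: "r (Suc k) \<le> r k"
proof -
  have "0 \<le> c * (\<Delta> k)\<^sup>2" using c by simp
  then show ?thesis using dec[of k] by linarith
qed

lemma r_mono: "k \<le> m \<Longrightarrow> r m \<le> r k"
  by (rule lift_Suc_antimono_le[of r]) (use r_Suc_le in auto)

lemma \<phi>_mono: "r m \<le> r k \<Longrightarrow> \<phi> (r m) \<le> \<phi> (r k)"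
  unfolding \<phi>_def using r0 \<alpha> by (intro powr_mono2) auto

lemma \<phi>_nonneg: "0 \<le> \<phi> x" unfolding \<phi>_def by simp

lemma M_pos: "M > 0" unfolding M_def using T B C1 c \<alpha> by auto

lemma window_sum_power2: "c * (\<Sum>j<T. \<Delta> (k + j))\<^sup>2 \<le> real T * (r k - r (k + T))"
proof -
  have "(\<Sum>j<T. \<Delta> (k + j))\<^sup>2 \<le> real T * (\<Sum>j<T. (\<Delta> (k + j))\<^sup>2)"
    using sum_squared_le_sum_of_squares[of "\<lambda>j. \<Delta> (k + j)" "{..<T}"] by (simp add: mult.commute)
  then have "c * (\<Sum>j<T. \<Delta> (k + j))\<^sup>2 \<le> c * (real T * (\<Sum>j<T. (\<Delta> (k + j))\<^sup>2))"
    using c by (intro mult_left_mono) auto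
  also have "\<dots> = real T * (\<Sum>j<T. c * (\<Delta> (k + j))\<^sup>2)" by (simp add: sum_distrib_left mult.left_commute)
  also have "\<dots> \<le> real T * (\<Sum>j<T. r (k + j) - r (Suc (k + j)))" by (intro mult_left_mono sum_mono dec) auto
  also have "\<dots> = real T * (r k - r (k + T))" using sum_lessThan_telescope'[of "\<lambda>j. r (k + j)" T] by simp
  finally show ?thesis .
qed

lemma \<phi>_decrease_lower:
  assumes "0 < r k" "k \<le> m"
  shows "(1 - \<alpha>) * (r k - r m) \<le> (\<phi> (r k) - \<phi> (r m)) * r k powr \<alpha>"
proof -
  have "r k powr (1 - \<alpha> - 1) * r k powr \<alpha> = 1" using assms(1) by (simp add: powr_add[symmetric])
  then have "(1 - \<alpha>) * (r k - r m) = ((1 - \<alpha>) * r k powr (1 - \<alpha> - 1) * (r k - r m)) * r k powr \<alpha>"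
    by (metis (no_types, lifting) mult.assoc mult.commute mult_1)
  also have "\<dots> \<le> (\<phi> (r k) - \<phi> (r m)) * r k powr \<alpha>"
    unfolding \<phi>_def using powr_tangent_ineq[of "r m" "r k" "1 - \<alpha>"] r0[of m] r_mono[OF assms(2)] assms(1) \<alpha>
    by (intro mult_right_mono) auto
  finally show ?thesis .
qed

text \<open>Along a window of \<open>T\<close> steps started near \<open>xs\<close>, the KL inequality converts the
  decrease of \<open>r\<close> into a decrease of \<open>\<phi> \<circ> r\<close> that dominates the length of the window.\<close>
lemma window_sum_bound:
  assumes "near k"
  shows "(\<Sum>j<T. \<Delta> (k + j)) \<le> M * (\<phi> (r k) - \<phi> (r (k + T)))"
proof -
  define S where "S = (\<Sum>j<T. \<Delta> (k + j))"
  define F where "F = \<phi> (r k) - \<phi> (r (k + T))"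
  have S0: "S \<ge> 0" unfolding S_def by (intro sum_nonneg \<Delta>0)
  have SS: "c * S\<^sup>2 \<le> real T * (r k - r (k + T))" unfolding S_def by (rule window_sum_power2)
  show ?thesis
  proof (cases "r k = 0")
    case True
    have "r (k + T) = 0" using r_mono[of k "k + T"] r0[of "k+T"] True by simp
    then have "S = 0" using SS S0 c True by (simp add: mult_le_0_iff)
    then show ?thesis using True \<open>r (k + T) = 0\<close> unfolding S_def \<phi>_def by simp
  next
    case False
    then have rk: "r k > 0" using r0[of k] by simp
    have "r k powr \<alpha> \<le> B * D k" using kl assms unfolding near_def by blast
    also have "\<dots> \<le> B * (C1 * S)" using Dle[of k] B unfolding S_def by (simp add: mult_left_mono)
    finally have kl2: "r k powr \<alpha> \<le> B * C1 * S" by (simp add: mult.assoc)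
    then have Spos: "S > 0" using rk S0 by (cases "S = 0") auto
    have F0: "F \<ge> 0" unfolding F_def using \<phi>_mono[OF r_mono[of k "k + T"]] by simp
    have "c * (1 - \<alpha>) * S\<^sup>2 \<le> real T * ((1 - \<alpha>) * (r k - r (k + T)))"
      using mult_left_mono[OF SS, of "1 - \<alpha>"] \<alpha> by (simp add: algebra_simps)
    also have "\<dots> \<le> real T * (F * r k powr \<alpha>)"
      unfolding F_def using \<phi>_decrease_lower[OF rk, of "k + T"] by (intro mult_left_mono) auto
    also have "\<dots> \<le> real T * (F * (B * C1 * S))" using kl2 F0 by (intro mult_left_mono) auto
    finally have "(c * (1 - \<alpha>) * S) * S \<le> (real T * F * B * C1) * S" by (simp add: algebra_simps power2_eq_square)
    then have "c * (1 - \<alpha>) * S \<le> real T * F * B * C1" using Spos by simp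
    then show ?thesis unfolding M_def F_def S_def using c \<alpha> by (simp add: field_simps)
  qed
qed

lemma tail_sum_bound:
  assumes "\<And>j. j < n \<Longrightarrow> near (k + j)"
  shows "(\<Sum>j<n. \<Delta> (k + j)) \<le> M * real T * \<phi> (r k)"
proof -
  have "(\<Sum>j<n. \<Delta> (k + j)) \<le> (\<Sum>j<n. \<Sum>t<T. \<Delta> (k + j + t))"
  proof (intro sum_mono)
    fix j assume "j \<in> {..<n}"
    have "\<Delta> (k + j + 0) \<le> (\<Sum>t<T. \<Delta> (k + j + t))"
      using T by (intro member_le_sum) (auto intro: \<Delta>0)
    then show "\<Delta> (k + j) \<le> (\<Sum>t<T. \<Delta> (k + j + t))" by simp
  qed
  also have "\<dots> \<le> (\<Sum>j<n. M * (\<phi> (r (k + j)) - \<phi> (r (k + j + T))))"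
    using assms by (intro sum_mono window_sum_bound) auto
  also have "\<dots> = M * ((\<Sum>t<T. \<phi> (r (k + t))) - (\<Sum>t<T. \<phi> (r (k + n + t))))"
    using sum_window_telescope[of "\<lambda>m. \<phi> (r m)" k T n] by (simp add: sum_distrib_left[symmetric])
  also have "\<dots> \<le> M * (\<Sum>t<T. \<phi> (r (k + t)))"
    using M_pos by (intro mult_left_mono) (auto intro!: sum_nonneg \<phi>_nonneg)
  also have "\<dots> \<le> M * (\<Sum>t<T. \<phi> (r k))"
    using M_pos by (intro mult_left_mono sum_mono \<phi>_mono r_mono) auto
  finally show ?thesis by (simp add: mult.assoc)
qed

lemma \<phi>_gap_lim: "(\<lambda>k. \<phi> (r k)) \<longlonglongrightarrow> 0"
  unfolding \<phi>_def using \<alpha> r0 by (intro tendsto_zero_powrI[OF rlim tendsto_const]) auto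

lemma eventually_near: "\<exists>K. \<forall>k\<ge>K. near k"
proof -
  have "eventually (\<lambda>k. M * real T * \<phi> (r k) < \<epsilon> / 2) sequentially"
    using tendsto_mult_left[OF \<phi>_gap_lim, of "M * real T"] \<epsilon> by (intro order_tendstoD) auto
  then obtain K1 where K1: "\<And>k. k \<ge> K1 \<Longrightarrow> M * real T * \<phi> (r k) < \<epsilon> / 2"
    unfolding eventually_sequentially by blast
  obtain K where K: "K \<ge> max K0 K1" "dist (z K) xs < \<epsilon> / 2" using cl[of "\<epsilon>/2" "max K0 K1"] \<epsilon> by auto
  have "near (K + n)" for n
  proof (induction n rule: less_induct)
    case (less n)
    have "dist (z (K + n)) (z K) \<le> (\<Sum>j<n. \<Delta> (K + j))" by (rule dist_le_sum_of_steps[of z \<Delta>, OF dz])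
    also have "\<dots> \<le> M * real T * \<phi> (r K)" using less by (intro tail_sum_bound) auto
    also have "\<dots> < \<epsilon> / 2" using K1 K by auto
    finally have "dist (z (K + n)) xs < \<epsilon>" using K(2) dist_triangle[of "z (K + n)" xs "z K"] by linarith
    then show ?case unfolding near_def using K by auto
  qed
  then show ?thesis by (metis le_add_diff_inverse)
qed

lemma converges_with_tail_bound: "z \<longlonglongrightarrow> xs \<and> (\<exists>K. \<forall>k\<ge>K. dist (z k) xs \<le> M * real T * \<phi> (r k))"
proof -
  obtain K where K: "\<And>k. k \<ge> K \<Longrightarrow> near k" using eventually_near by blast
  have tail: "dist (z (k + n)) (z k) \<le> M * real T * \<phi> (r k)" if "k \<ge> K" for k n
    using dist_le_sum_of_steps[of z \<Delta>, OF dz, of k n] tail_sum_bound[of n k] K that by force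
  have "Cauchy z"
    using tail tendsto_mult_left[OF \<phi>_gap_lim, of "M * real T"] by (intro Cauchy_if_tail_dist_bound) auto
  then obtain l where "z \<longlonglongrightarrow> l" using Cauchy_convergent_iff convergent_def by blast
  moreover have "l = xs" using LIMSEQ_cluster_point_unique[OF \<open>z \<longlonglongrightarrow> l\<close> cl] .
  ultimately show ?thesis using tail by (blast intro: dist_limit_le_tail_bound)
qed


lemma gap_contraction:
  assumes a: "\<alpha> = 1/2" and g: "near k"
  shows "r (k + T) \<le> (1 - c / (real T * C1\<^sup>2 * B\<^sup>2)) * r k"
proof -
  define S where "S = (\<Sum>j<T. \<Delta> (k + j))"
  have "sqrt (r k) \<le> B * D k" using kl[of k] g a r0[of k] unfolding near_def by (simp add: powr_half_sqrt)
  then have "0 \<le> B * D k" using real_sqrt_ge_zero[of "r k"] r0[of k] by linarith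
  then have D0: "D k \<ge> 0" using B by (simp add: zero_le_mult_iff)
  have "r k = (sqrt (r k))\<^sup>2" using r0[of k] by simp
  also have "\<dots> \<le> (B * D k)\<^sup>2" using \<open>sqrt (r k) \<le> B * D k\<close> r0[of k] by (intro power_mono) auto
  also have "\<dots> \<le> (B * (C1 * S))\<^sup>2" using Dle[of k] D0 B unfolding S_def by (intro power_mono mult_left_mono) auto
  finally have "c * r k \<le> (B * C1)\<^sup>2 * (c * S\<^sup>2)" using c by (simp add: algebra_simps power_mult_distrib)
  also have "\<dots> \<le> (B * C1)\<^sup>2 * (real T * (r k - r (k + T)))"
    unfolding S_def by (intro mult_left_mono window_sum_power2) auto
  finally have "c / (real T * C1\<^sup>2 * B\<^sup>2) * r k \<le> r k - r (k + T)"
    using T C1 B by (simp add: field_simps power_mult_distrib)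
  then show ?thesis by (simp add: algebra_simps)
qed


lemma gap_linear_decay:
  assumes "\<alpha> = 1/2"
  shows "\<exists>K \<kappa>. 0 < \<kappa> \<and> \<kappa> < 1 \<and> (\<forall>n. r (K + n) \<le> \<kappa> ^ (n div T) * r K)
           \<and> (\<forall>k\<ge>K. dist (z k) xs \<le> M * real T * \<phi> (r k))"
proof -
  obtain K1 where K1: "\<And>k. k \<ge> K1 \<Longrightarrow> near k" using eventually_near by blast
  obtain K2 where K2: "\<And>k. k \<ge> K2 \<Longrightarrow> dist (z k) xs \<le> M * real T * \<phi> (r k)"
    using converges_with_tail_bound by blast
  define K where "K = max K1 K2"
  define \<kappa> where "\<kappa> = max (1/2) (1 - c / (real T * C1\<^sup>2 * B\<^sup>2))"
  have "c / (real T * C1\<^sup>2 * B\<^sup>2) > 0" using T C1 B c by simp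
  then have \<kappa>: "0 < \<kappa>" "\<kappa> < 1" unfolding \<kappa>_def by auto
  have step: "r (k + T) \<le> \<kappa> * r k" if "k \<ge> K" for k
  proof -
    have "r (k + T) \<le> (1 - c / (real T * C1\<^sup>2 * B\<^sup>2)) * r k"
      using gap_contraction[OF assms K1] that K_def by auto
    also have "\<dots> \<le> \<kappa> * r k" unfolding \<kappa>_def using r0[of k] by (intro mult_right_mono) auto
    finally show ?thesis .
  qed
  have iter: "r (K + T * q) \<le> \<kappa> ^ q * r K" for q
  proof (induction q)
    case (Suc q)
    have "r (K + T * Suc q) = r ((K + T * q) + T)" by (simp add: algebra_simps)
    also have "\<dots> \<le> \<kappa> * r (K + T * q)" by (rule step) simp
    also have "\<dots> \<le> \<kappa> * (\<kappa> ^ q * r K)" using Suc \<kappa> by (intro mult_left_mono) auto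
    finally show ?case by simp
  qed simp
  have "r (K + n) \<le> \<kappa> ^ (n div T) * r K" for n
    using r_mono[of "K + T * (n div T)" "K + n"] iter[of "n div T"] by simp
  moreover have "dist (z k) xs \<le> M * real T * \<phi> (r k)" if "k \<ge> K" for k using K2 that K_def by simp
  ultimately show ?thesis using \<kappa> by blast
qed

lemma linear_rate:
  assumes "\<alpha> = 1/2"
  shows "\<exists>C \<rho>. 0 \<le> \<rho> \<and> \<rho> < 1 \<and> (\<forall>k. dist (z k) xs \<le> C * \<rho> ^ k)"
proof -
  obtain \<kappa> K where \<kappa>: "0 < \<kappa>" "\<kappa> < 1" and decay: "\<And>n. r (K + n) \<le> \<kappa> ^ (n div T) * r K"
    and tail: "\<And>k. k \<ge> K \<Longrightarrow> dist (z k) xs \<le> M * real T * \<phi> (r k)"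
    using gap_linear_decay[OF assms] by blast
  define \<rho> where "\<rho> = \<kappa> powr (1 / (2 * real T))"
  have \<rho>: "0 < \<rho>" "\<rho> < 1" unfolding \<rho>_def using \<kappa> T powr_less_mono2[of "1/(2*real T)" \<kappa> 1] by auto
  have \<rho>T: "\<rho> ^ T = sqrt \<kappa>"
  proof -
    have "\<rho> ^ T = \<rho> powr real T" using \<rho> by (simp add: powr_realpow)
    also have "\<dots> = \<kappa> powr (1/2)" unfolding \<rho>_def using T by (simp add: powr_powr)
    finally show ?thesis using \<kappa> by (simp add: powr_half_sqrt)
  qed
  define A where "A = M * real T * sqrt (r K) / (\<rho> ^ T * \<rho> ^ K)"
  have "A \<ge> 0" unfolding A_def using M_pos \<rho> r0[of K] by (intro divide_nonneg_pos mult_nonneg_nonneg) auto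
  moreover have "dist (z (K + n)) xs \<le> A * \<rho> ^ (K + n)" for n
  proof -
    have half: "1 - \<alpha> = 1/2" using assms by simp
    have "\<phi> (r (K + n)) = sqrt (r (K + n))" unfolding \<phi>_def half
      using r0[of "K+n"] by (simp add: powr_half_sqrt)
    also have "\<dots> \<le> sqrt (\<kappa> ^ (n div T) * r K)" using decay by simp
    also have "\<dots> = \<rho> ^ (T * (n div T)) * sqrt (r K)" by (simp add: real_sqrt_mult real_sqrt_power \<rho>T power_mult)
    also have "\<dots> \<le> \<rho> ^ n / \<rho> ^ T * sqrt (r K)"
      using power_mult_div_le[OF \<rho>(1) less_imp_le[OF \<rho>(2)] T] r0[of K] by (intro mult_right_mono) auto
    finally have "M * real T * \<phi> (r (K + n)) \<le> M * real T * (\<rho> ^ n / \<rho> ^ T * sqrt (r K))"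
      using M_pos by (intro mult_left_mono) auto
    then have "dist (z (K + n)) xs \<le> M * real T * (\<rho> ^ n / \<rho> ^ T * sqrt (r K))"
      using tail[of "K + n"] by simp
    also have "\<dots> = A * \<rho> ^ (K + n)" unfolding A_def using \<rho> by (simp add: power_add field_simps)
    finally show ?thesis .
  qed
  ultimately have "\<exists>C. \<forall>k. dist (z k) xs \<le> C * \<rho> ^ k" by (rule geometric_bound_from_tail[OF \<rho>(1)])
  then obtain C where "\<And>k. dist (z k) xs \<le> C * \<rho> ^ k" by blast
  then show ?thesis using \<rho> by (intro exI[of _ C] exI[of _ \<rho>]) auto
qed

end

section \<open>The sharing algorithm\<close>

fun last_eval :: "(nat \<Rightarrow> 'a^'N) \<Rightarrow> (nat \<Rightarrow> 'N set) \<Rightarrow> 'a^'N \<Rightarrow> nat \<Rightarrow> 'a^'N" where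
  "last_eval z I x0 0 = x0"
| "last_eval z I x0 (Suc k) = (\<chi> i. if i \<in> I (Suc k) then z k $ i else last_eval z I x0 k $ i)"

lemma norm_vec_power2: "(norm (x :: 'a::real_normed_vector^'N))\<^sup>2 = (\<Sum>i\<in>UNIV. (norm (x $ i))\<^sup>2)"
  unfolding norm_vec_def L2_set_def by (simp add: sum_nonneg)

lemma norm_vec_le_sum_norm: "norm (x :: 'a::real_normed_vector^'N) \<le> (\<Sum>i\<in>UNIV. norm (x $ i))"
  unfolding norm_vec_def by (rule L2_set_le_sum) simp

locale sharing =
  fixes f :: "'N::finite \<Rightarrow> real^'n::finite \<Rightarrow> real"
    and gf :: "'N \<Rightarrow> real^'n \<Rightarrow> real^'n"
    and L :: "'N \<Rightarrow> real"
    and g :: "real^'n \<Rightarrow> ereal"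
    and \<theta> :: real
    and \<gamma> :: "'N \<Rightarrow> real"
    and xinit :: "real^'n^'N"
    and I :: "nat \<Rightarrow> 'N set"
  assumes g_proper: "proper_fun g" and g_convex: "ereal_convex g" and g_lsc: "lsc_fun g"
    and f_grad: "\<And>i x. (f i has_derivative (\<lambda>h. inner (gf i x) h)) (at x)"
    and L_pos: "\<And>i. L i > 0"
    and f_lip: "\<And>i x y. norm (gf i x - gf i y) \<le> L i * norm (x - y)"
    and coercive: "\<And>M::real. \<exists>R. \<forall>x. norm x \<ge> R \<longrightarrow> sharing_obj f g x \<ge> ereal M"
    and theta: "0 < \<theta>" "\<theta> < 1"
    and KL: "KL_exponent (sharing_obj f g) \<theta>"
    and gamma: "\<And>i. 0 < \<gamma> i \<and> \<gamma> i < real CARD('N) / L i"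
    and cyclic: "essentially_cyclic I"
begin

text \<open>\<open>\<Gamma>\<close> and \<open>st k\<close> are the paper's \<open>\<gamma>\<close>-tilde and \<open>s\<close>-tilde at iteration \<open>k\<close>, and \<open>u k\<close>
  is the prox point \<open>prox \<Gamma> g (st k)\<close>. \<open>xh k $ i\<close> is the point \<open>z\<close> at which block \<open>i\<close> was last
  updated, so that \<open>s k $ i = grad_step i (xh k $ i)\<close>.\<close>

definition \<Gamma> :: real where "\<Gamma> = (\<Sum>i\<in>UNIV. \<gamma> i)"
definition s :: "nat \<Rightarrow> real^'n^'N" where "s k = fst (sharing_state gf g \<gamma> xinit I k)"
definition st :: "nat \<Rightarrow> real^'n" where "st k = snd (sharing_state gf g \<gamma> xinit I k)"
definition u :: "nat \<Rightarrow> real^'n" where "u k = prox \<Gamma> g (st k)"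
definition w :: "nat \<Rightarrow> real^'n" where "w k = sharing_w g \<Gamma> (st k)"
definition z :: "nat \<Rightarrow> real^'n^'N" where "z k = sharing_z gf g \<gamma> xinit I k"
definition xh :: "nat \<Rightarrow> real^'n^'N" where "xh k = last_eval z I xinit k"
definition grad_step :: "'N \<Rightarrow> real^'n \<Rightarrow> real^'n" where
  "grad_step i x = x - (\<gamma> i / real CARD('N)) *\<^sub>R gf i x"

lemma gamma_pos: "\<gamma> i > 0" using gamma by blast

lemma Gamma_pos: "\<Gamma> > 0" unfolding \<Gamma>_def using gamma_pos by (simp add: sum_pos)

lemma gamma_le_Gamma: "\<gamma> i \<le> \<Gamma>"
  unfolding \<Gamma>_def using gamma_pos by (intro member_le_sum) (auto intro: less_imp_le)

lemma w_eq: "w k = (1 / \<Gamma>) *\<^sub>R (u k - st k)"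
  unfolding w_def u_def sharing_w_def ..

lemma z_eq: "z k = (\<chi> i. s k $ i + \<gamma> i *\<^sub>R w k)"
  unfolding z_def sharing_z_def s_def st_def w_def \<Gamma>_def by (simp add: case_prod_beta)

lemma state_Suc: "sharing_state gf g \<gamma> xinit I (Suc k) =
   ((\<chi> i. if i \<in> I (Suc k) then grad_step i (z k $ i) else s k $ i),
    st k + (\<Sum>i\<in>I (Suc k). grad_step i (z k $ i) - s k $ i))"
  unfolding s_def st_def grad_step_def z_eq w_def \<Gamma>_def by (simp add: case_prod_beta Let_def vec_eq_iff st_def)

lemma s_Suc: "s (Suc k) = (\<chi> i. if i \<in> I (Suc k) then grad_step i (z k $ i) else s k $ i)"
  using state_Suc unfolding s_def by simp

lemma st_Suc: "st (Suc k) = st k + (\<Sum>i\<in>I (Suc k). grad_step i (z k $ i) - s k $ i)"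
  using state_Suc unfolding st_def by (simp only: snd_conv)

lemma st_eq_sum: "st k = (\<Sum>i\<in>UNIV. s k $ i)"
proof (induction k)
  case 0 then show ?case unfolding st_def s_def by (simp add: Let_def)
next
  case (Suc k)
  have "(\<Sum>i\<in>UNIV. s (Suc k) $ i) = (\<Sum>i\<in>UNIV. s k $ i + (if i \<in> I (Suc k) then grad_step i (z k $ i) - s k $ i else 0))"
    unfolding s_Suc by (intro sum.cong) auto
  also have "\<dots> = (\<Sum>i\<in>UNIV. s k $ i) + (\<Sum>i\<in>I (Suc k). grad_step i (z k $ i) - s k $ i)"
    by (simp add: sum.distrib sum.If_cases)
  finally show ?case using Suc by (simp add: st_Suc)
qed

lemma xh_0: "xh 0 = xinit" unfolding xh_def by simp

lemma xh_Suc: "xh (Suc k) = (\<chi> i. if i \<in> I (Suc k) then z k $ i else xh k $ i)"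
  unfolding xh_def by simp

lemma s_eq_grad_step: "s k $ i = grad_step i (xh k $ i)"
proof (induction k)
  case 0 then show ?case unfolding s_def xh_0 grad_step_def by (simp add: Let_def)
next
  case (Suc k) then show ?case unfolding s_Suc xh_Suc by simp
qed

lemma sum_z_eq_u: "(\<Sum>i\<in>UNIV. z k $ i) = u k"
proof -
  have "(\<Sum>i\<in>UNIV. z k $ i) = (\<Sum>i\<in>UNIV. s k $ i) + (\<Sum>i\<in>UNIV. \<gamma> i *\<^sub>R w k)"
    unfolding z_eq by (simp add: sum.distrib)
  also have "\<dots> = st k + \<Gamma> *\<^sub>R w k" unfolding st_eq_sum \<Gamma>_def by (simp add: scaleR_sum_left)
  also have "\<dots> = u k" unfolding w_eq using Gamma_pos by simp
  finally show ?thesis .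
qed

lemma z_minus_xh: "z k $ i - xh k $ i = \<gamma> i *\<^sub>R w k - (\<gamma> i / real CARD('N)) *\<^sub>R gf i (xh k $ i)"
  unfolding z_eq using s_eq_grad_step[of k i] unfolding grad_step_def by simp

definition gu :: "nat \<Rightarrow> real" where "gu k = real_of_ereal (g (u k))"

lemma u_prox_subgradient: "g (u k) = ereal (gu k) \<and> (\<forall>v. ereal (gu k - inner (w k) (v - u k)) \<le> g v)"
proof -
  obtain P where P: "g (u k) = ereal P" "\<forall>v. ereal (P + inner ((1/\<Gamma>) *\<^sub>R (st k - u k)) (v - u k)) \<le> g v"
    using prox_subgradient_ineq[OF g_proper g_convex g_lsc Gamma_pos, of "st k"] unfolding u_def by blast
  have "inner ((1/\<Gamma>) *\<^sub>R (st k - u k)) y = - inner (w k) y" for y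
    unfolding w_eq by (simp add: inner_diff_left) (metis minus_diff_eq minus_divide_left)
  then show ?thesis using P unfolding gu_def by simp
qed

lemma g_u: "g (u k) = ereal (gu k)" using u_prox_subgradient by blast

lemma g_subgradient_ineq: "ereal (gu k - inner (w k) (v - u k)) \<le> g v" using u_prox_subgradient by blast


definition model :: "'N \<Rightarrow> nat \<Rightarrow> real^'n \<Rightarrow> real" where
  "model i k y = (1 / real CARD('N)) * (f i (xh k $ i) + inner (gf i (xh k $ i)) (y - xh k $ i))
     + (norm (y - xh k $ i))\<^sup>2 / (2 * \<gamma> i)"

definition V :: "nat \<Rightarrow> real" where "V k = (\<Sum>i\<in>UNIV. model i k (z k $ i)) + gu k"

definition curv_lo :: "'N \<Rightarrow> real" where "curv_lo i = 1 / (2 * \<gamma> i) - L i / (2 * real CARD('N))"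

definition curv_hi :: "'N \<Rightarrow> real" where "curv_hi i = 1 / (2 * \<gamma> i) + L i / (2 * real CARD('N))"

lemma curv_lo_pos: "curv_lo i > 0"
proof -
  have "\<gamma> i * L i < real CARD('N)" using gamma[of i] L_pos[of i] by (simp add: field_simps)
  then have "L i / (2 * real CARD('N)) < 1 / (2 * \<gamma> i)" using gamma_pos[of i] L_pos[of i]
    by (simp add: field_simps)
  then show ?thesis unfolding curv_lo_def by simp
qed

lemma model_diff: "model i k y - model i k (z k $ i) = inner (w k) (y - z k $ i) + (norm (y - z k $ i))\<^sup>2 / (2 * \<gamma> i)"
proof -
  define x where "x = xh k $ i"
  define y0 where "y0 = z k $ i"
  define p where "p = gf i x"
  define n where "n = real CARD('N)"
  have n: "n > 0" unfolding n_def by simp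
  have gi: "\<gamma> i > 0" by (rule gamma_pos)
  have zx: "y0 - x = \<gamma> i *\<^sub>R w k - (\<gamma> i / n) *\<^sub>R p" unfolding y0_def x_def p_def n_def by (rule z_minus_xh)
  have e: "(norm (y - x))\<^sup>2 = (norm (y - y0))\<^sup>2 + 2 * inner (y - y0) (y0 - x) + (norm (y0 - x))\<^sup>2"
    using norm_add_scaleR_power2[of "y - y0" 1 "y0 - x"] by simp
  have ip: "inner (y - y0) (y0 - x) = \<gamma> i * inner (y - y0) (w k) - (\<gamma> i / n) * inner (y - y0) p"
    unfolding zx by (simp add: inner_diff_right)
  have "model i k y - model i k y0 = (1/n) * inner p (y - y0) + ((norm (y - x))\<^sup>2 - (norm (y0 - x))\<^sup>2) / (2 * \<gamma> i)"
    unfolding model_def x_def[symmetric] p_def[symmetric] n_def[symmetric]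
    by (simp add: inner_diff_right diff_divide_distrib algebra_simps)
  also have "\<dots> = (1/n) * inner p (y - y0) + ((norm (y - y0))\<^sup>2 + 2 * (\<gamma> i * inner (y - y0) (w k) - (\<gamma> i / n) * inner (y - y0) p)) / (2 * \<gamma> i)"
    unfolding e ip by simp
  also have "\<dots> = inner (w k) (y - y0) + (norm (y - y0))\<^sup>2 / (2 * \<gamma> i)"
    using gi n by (simp add: field_simps inner_commute)
  finally show ?thesis unfolding y0_def .
qed

lemma V_plus_dist_le_model:
  assumes "g (\<Sum>i\<in>UNIV. x $ i) = ereal Gx"
  shows "V k + (\<Sum>i\<in>UNIV. (norm (x $ i - z k $ i))\<^sup>2 / (2 * \<gamma> i)) \<le> (\<Sum>i\<in>UNIV. model i k (x $ i)) + Gx"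
proof -
  have "(\<Sum>i\<in>UNIV. model i k (x $ i)) = (\<Sum>i\<in>UNIV. model i k (z k $ i) + inner (w k) (x $ i - z k $ i)
        + (norm (x $ i - z k $ i))\<^sup>2 / (2 * \<gamma> i))"
    using model_diff by (intro sum.cong) (auto simp: algebra_simps)
  also have "\<dots> = (\<Sum>i\<in>UNIV. model i k (z k $ i)) + inner (w k) ((\<Sum>i\<in>UNIV. x $ i) - u k)
        + (\<Sum>i\<in>UNIV. (norm (x $ i - z k $ i))\<^sup>2 / (2 * \<gamma> i))"
    by (simp add: sum.distrib inner_sum_right[symmetric] sum_subtractf sum_z_eq_u)
  finally have e: "(\<Sum>i\<in>UNIV. model i k (x $ i)) = (\<Sum>i\<in>UNIV. model i k (z k $ i)) + inner (w k) ((\<Sum>i\<in>UNIV. x $ i) - u k)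
        + (\<Sum>i\<in>UNIV. (norm (x $ i - z k $ i))\<^sup>2 / (2 * \<gamma> i))" .
  have "gu k - inner (w k) ((\<Sum>i\<in>UNIV. x $ i) - u k) \<le> Gx"
    using g_subgradient_ineq[of k "\<Sum>i\<in>UNIV. x $ i"] assms by simp
  then show ?thesis unfolding V_def e by simp
qed

lemma model_Suc: "model i (Suc k) (z k $ i) = (if i \<in> I (Suc k) then f i (z k $ i) / real CARD('N) else model i k (z k $ i))"
  unfolding model_def xh_Suc by simp

lemma model_gap_bounds:
  shows "curv_lo i * (norm (z k $ i - xh k $ i))\<^sup>2 \<le> model i k (z k $ i) - f i (z k $ i) / real CARD('N)"
    and "model i k (z k $ i) - f i (z k $ i) / real CARD('N) \<le> curv_hi i * (norm (z k $ i - xh k $ i))\<^sup>2"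
proof -
  define x where "x = xh k $ i"
  define y where "y = z k $ i"
  define n where "n = real CARD('N)"
  define r where "r = f i y - f i x - inner (gf i x) (y - x)"
  define d where "d = (norm (y - x))\<^sup>2"
  have n: "n > 0" unfolding n_def by simp
  have "\<bar>r\<bar> \<le> L i / 2 * d"
    unfolding r_def d_def using lipschitz_gradient_quadratic_bound[OF f_grad f_lip] .
  then have r: "\<bar>r / n\<bar> \<le> L i / (2 * n) * d" using n by (simp add: abs_divide field_simps)
  have e: "model i k y - f i y / n = d / (2 * \<gamma> i) - r / n"
    unfolding model_def x_def[symmetric] n_def[symmetric] r_def d_def using n by (simp add: field_simps)
  have "curv_lo i * d = d / (2 * \<gamma> i) - L i / (2 * n) * d" "curv_hi i * d = d / (2 * \<gamma> i) + L i / (2 * n) * d"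
    unfolding curv_lo_def curv_hi_def n_def by (simp_all add: algebra_simps)
  then show "curv_lo i * (norm (z k $ i - xh k $ i))\<^sup>2 \<le> model i k (z k $ i) - f i (z k $ i) / real CARD('N)"
    and "model i k (z k $ i) - f i (z k $ i) / real CARD('N) \<le> curv_hi i * (norm (z k $ i - xh k $ i))\<^sup>2"
    using e r unfolding x_def y_def n_def d_def abs_le_iff by linarith+
qed

lemma V_decrease:
  "V (Suc k) + (\<Sum>i\<in>UNIV. (norm (z (Suc k) $ i - z k $ i))\<^sup>2 / (2 * \<gamma> i))
    + (\<Sum>i\<in>UNIV. curv_lo i * (norm (xh (Suc k) $ i - xh k $ i))\<^sup>2) \<le> V k"
proof -
  have "V (Suc k) + (\<Sum>i\<in>UNIV. (norm (z k $ i - z (Suc k) $ i))\<^sup>2 / (2 * \<gamma> i))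
      \<le> (\<Sum>i\<in>UNIV. model i (Suc k) (z k $ i)) + gu k"
    by (rule V_plus_dist_le_model) (simp add: sum_z_eq_u g_u)
  moreover have "model i (Suc k) (z k $ i) + curv_lo i * (norm (xh (Suc k) $ i - xh k $ i))\<^sup>2 \<le> model i k (z k $ i)" for i
  proof (cases "i \<in> I (Suc k)")
    case True
    then show ?thesis using model_gap_bounds(1)[of i k] unfolding model_Suc xh_Suc by simp
  next
    case False
    then show ?thesis unfolding model_Suc xh_Suc by simp
  qed
  then have "(\<Sum>i\<in>UNIV. model i (Suc k) (z k $ i)) + (\<Sum>i\<in>UNIV. curv_lo i * (norm (xh (Suc k) $ i - xh k $ i))\<^sup>2)
      \<le> (\<Sum>i\<in>UNIV. model i k (z k $ i))"
    by (simp add: sum.distrib[symmetric] sum_mono)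
  ultimately show ?thesis unfolding V_def by (simp add: norm_minus_commute)
qed


definition F :: "real^'n^'N \<Rightarrow> real" where "F x = (1 / real CARD('N)) * (\<Sum>i\<in>UNIV. f i (x $ i))"

definition grad_F :: "real^'n^'N \<Rightarrow> real^'n^'N" where
  "grad_F x = (\<chi> i. (1 / real CARD('N)) *\<^sub>R gf i (x $ i))"

definition Phi_z :: "nat \<Rightarrow> real" where "Phi_z k = F (z k) + gu k"

definition subgrad :: "nat \<Rightarrow> real^'n^'N" where "subgrad k = grad_F (z k) - (\<chi> i. w k)"

definition C_gap :: real where "C_gap = (\<Sum>i\<in>UNIV. curv_hi i)"

definition C_quad :: real where "C_quad = (\<Sum>i\<in>UNIV. L i / (2 * real CARD('N)))"

definition C_sub :: real where "C_sub = (\<Sum>i\<in>UNIV. L i / real CARD('N) + 1 / \<gamma> i)"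

lemma sharing_obj_eq: "sharing_obj f g x = ereal (F x) + g (\<Sum>i\<in>UNIV. x $ i)"
  unfolding sharing_obj_def F_def ..

lemma Phi_z_eq: "sharing_obj f g (z k) = ereal (Phi_z k)"
  unfolding sharing_obj_eq Phi_z_def sum_z_eq_u g_u by simp

lemma curv_hi_nonneg: "curv_hi i \<ge> 0" unfolding curv_hi_def using gamma_pos[of i] L_pos[of i] by simp

lemma C_gap_nonneg: "C_gap \<ge> 0" unfolding C_gap_def using curv_hi_nonneg by (simp add: sum_nonneg)

lemma C_quad_nonneg: "C_quad \<ge> 0" unfolding C_quad_def using L_pos by (intro sum_nonneg) (auto intro: less_imp_le)

lemma C_sub_nonneg: "C_sub \<ge> 0" unfolding C_sub_def using L_pos gamma_pos
  by (intro sum_nonneg add_nonneg_nonneg) (auto intro: less_imp_le)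

lemma norm_power2_nth_le: "(norm (x $ i))\<^sup>2 \<le> (norm x)\<^sup>2"
  using Finite_Cartesian_Product.norm_nth_le[of x i] by (intro power_mono) auto

lemma V_minus_Phi_z: "0 \<le> V k - Phi_z k" "V k - Phi_z k \<le> C_gap * (norm (z k - xh k))\<^sup>2"
proof -
  have e: "V k - Phi_z k = (\<Sum>i\<in>UNIV. model i k (z k $ i) - f i (z k $ i) / real CARD('N))"
    unfolding V_def Phi_z_def F_def by (simp add: sum_subtractf sum_divide_distrib)
  have "0 \<le> curv_lo i * (norm (z k $ i - xh k $ i))\<^sup>2" for i using curv_lo_pos[of i] by simp
  then show "0 \<le> V k - Phi_z k" unfolding e using model_gap_bounds(1) by (intro sum_nonneg) (meson order_trans)
  have "curv_hi i * (norm (z k $ i - xh k $ i))\<^sup>2 \<le> curv_hi i * (norm (z k - xh k))\<^sup>2" for i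
    using curv_hi_nonneg norm_power2_nth_le[of "z k - xh k" i] by (intro mult_left_mono) auto
  then have "V k - Phi_z k \<le> (\<Sum>i\<in>UNIV. curv_hi i * (norm (z k - xh k))\<^sup>2)"
    unfolding e using model_gap_bounds(2) by (intro sum_mono) (meson order_trans)
  then show "V k - Phi_z k \<le> C_gap * (norm (z k - xh k))\<^sup>2" unfolding C_gap_def by (simp add: sum_distrib_right)
qed

lemma F_quadratic_minorant: "F y + inner (grad_F y) (x - y) - C_quad * (norm (x - y))\<^sup>2 \<le> F x"
proof -
  have "f i (y $ i) + inner (gf i (y $ i)) (x $ i - y $ i) - L i / 2 * (norm (x - y))\<^sup>2 \<le> f i (x $ i)" for i
  proof -
    have "L i / 2 * (norm (x $ i - y $ i))\<^sup>2 \<le> L i / 2 * (norm (x - y))\<^sup>2"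
      using L_pos[of i] norm_power2_nth_le[of "x - y" i] by (intro mult_left_mono) auto
    then show ?thesis
      using lipschitz_gradient_quadratic_bound[OF f_grad[of i] f_lip[of i], where x = "y $ i" and y = "x $ i"]
      unfolding abs_le_iff by linarith
  qed
  then have "(\<Sum>i\<in>UNIV. f i (y $ i)) + (\<Sum>i\<in>UNIV. inner (gf i (y $ i)) (x $ i - y $ i))
      - (\<Sum>i\<in>UNIV. L i / 2 * (norm (x - y))\<^sup>2) \<le> (\<Sum>i\<in>UNIV. f i (x $ i))"
    by (metis (no_types, lifting) sum.distrib sum_mono sum_subtractf)
  then have "(1 / real CARD('N)) * ((\<Sum>i\<in>UNIV. f i (y $ i)) + (\<Sum>i\<in>UNIV. inner (gf i (y $ i)) (x $ i - y $ i))
      - (\<Sum>i\<in>UNIV. L i / 2 * (norm (x - y))\<^sup>2)) \<le> (1 / real CARD('N)) * (\<Sum>i\<in>UNIV. f i (x $ i))"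
    by (intro mult_left_mono) auto
  moreover have "inner (grad_F y) (x - y) = (1 / real CARD('N)) * (\<Sum>i\<in>UNIV. inner (gf i (y $ i)) (x $ i - y $ i))"
    unfolding grad_F_def by (subst inner_vec_def) (simp add: sum_distrib_left)
  moreover have "C_quad * (norm (x - y))\<^sup>2 = (1 / real CARD('N)) * (\<Sum>i\<in>UNIV. L i / 2 * (norm (x - y))\<^sup>2)"
    unfolding C_quad_def by (simp add: sum_distrib_left sum_distrib_right field_simps)
  ultimately show ?thesis unfolding F_def by (simp only: distrib_left right_diff_distrib)
qed

text \<open>Sum of the prox subgradient inequality for \<open>g\<close> at \<open>u k = (\<Sum>i. z k $ i)\<close> and the
  quadratic minorant of \<open>F\<close> at \<open>z k\<close>.\<close>
lemma Phi_quadratic_minorant: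
  "ereal (Phi_z k + inner (subgrad k) (x - z k) - C_quad * (norm (x - z k))\<^sup>2) \<le> sharing_obj f g x"
proof (cases "g (\<Sum>i\<in>UNIV. x $ i)")
  case (real Gx)
  have "inner (\<chi> i. w k) (x - z k) = (\<Sum>i\<in>UNIV. inner (w k) (x $ i - z k $ i))"
    by (subst inner_vec_def) simp
  also have "\<dots> = inner (w k) ((\<Sum>i\<in>UNIV. x $ i) - u k)"
    by (simp add: inner_sum_right[symmetric] sum_subtractf sum_z_eq_u)
  finally have "gu k - inner (\<chi> i. w k) (x - z k) \<le> Gx"
    using g_subgradient_ineq[of k "\<Sum>i\<in>UNIV. x $ i"] real by simp
  moreover have "inner (subgrad k) (x - z k) = inner (grad_F (z k)) (x - z k) - inner (\<chi> i. w k) (x - z k)"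
    unfolding subgrad_def by (simp add: inner_diff_left)
  ultimately show ?thesis
    using F_quadratic_minorant[of "z k" x] unfolding sharing_obj_eq Phi_z_def real by simp
next
  case PInf then show ?thesis unfolding sharing_obj_eq by simp
next
  case MInf then show ?thesis using proper_fun_not_minf[OF g_proper] by simp
qed

lemma subgrad_in_reg_subdiff: "subgrad k \<in> reg_subdiff (sharing_obj f g) (z k)"
  by (rule reg_subdiff_of_quadratic_minorant[OF Phi_z_eq Phi_quadratic_minorant C_quad_nonneg])

lemma norm_subgrad_le: "norm (subgrad k) \<le> C_sub * norm (z k - xh k)"
proof -
  define n where "n = real CARD('N)"
  have n: "n > 0" unfolding n_def by simp
  have vi: "subgrad k $ i = (1 / n) *\<^sub>R (gf i (z k $ i) - gf i (xh k $ i)) - (1 / \<gamma> i) *\<^sub>R (z k $ i - xh k $ i)" for i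
  proof -
    have "(1 / \<gamma> i) *\<^sub>R (z k $ i - xh k $ i) = w k - (1 / n) *\<^sub>R gf i (xh k $ i)"
      unfolding z_minus_xh n_def using gamma_pos[of i] by (simp add: scaleR_diff_right)
    then show ?thesis unfolding subgrad_def grad_F_def n_def by (simp add: scaleR_diff_right algebra_simps)
  qed
  have "norm (subgrad k) \<le> (\<Sum>i\<in>UNIV. norm (subgrad k $ i))" by (rule norm_vec_le_sum_norm)
  also have "\<dots> \<le> (\<Sum>i\<in>UNIV. (L i / real CARD('N) + 1 / \<gamma> i) * norm (z k - xh k))"
  proof (intro sum_mono)
    fix i
    have "norm (subgrad k $ i) \<le> (1 / n) * norm (gf i (z k $ i) - gf i (xh k $ i)) + (1 / \<gamma> i) * norm (z k $ i - xh k $ i)"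
      unfolding vi using n gamma_pos[of i] by (metis (no_types, lifting) norm_triangle_ineq4 norm_scaleR abs_of_pos divide_pos_pos zero_less_one)
    also have "\<dots> \<le> (1 / n) * (L i * norm (z k $ i - xh k $ i)) + (1 / \<gamma> i) * norm (z k $ i - xh k $ i)"
      using f_lip n gamma_pos[of i] by (intro add_mono mult_left_mono) auto
    also have "\<dots> = (L i / n + 1 / \<gamma> i) * norm (z k $ i - xh k $ i)" by (simp add: algebra_simps)
    also have "\<dots> \<le> (L i / n + 1 / \<gamma> i) * norm (z k - xh k)"
      using Finite_Cartesian_Product.norm_nth_le[where x="z k - xh k" and i=i] L_pos[of i] gamma_pos[of i] n by (intro mult_left_mono) auto
    finally show "norm (subgrad k $ i) \<le> (L i / real CARD('N) + 1 / \<gamma> i) * norm (z k - xh k)" unfolding n_def .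
  qed
  also have "\<dots> = C_sub * norm (z k - xh k)" unfolding C_sub_def by (simp add: sum_distrib_right)
  finally show ?thesis .
qed


definition step :: "nat \<Rightarrow> real" where "step k = norm (z (Suc k) - z k) + norm (xh (Suc k) - xh k)"

definition lag :: "nat \<Rightarrow> real" where "lag k = norm (z k - xh k)"

definition curv_lo_min :: real where "curv_lo_min = Min (range curv_lo)"

definition c_desc :: real where "c_desc = min (1 / (2 * \<Gamma>)) curv_lo_min"

definition period :: nat where
  "period = (SOME T::nat. T \<ge> 1 \<and> (\<forall>k i. \<exists>t\<in>{1..T}. i \<in> I (k + t)))"

lemma curv_lo_min_pos: "curv_lo_min > 0" unfolding curv_lo_min_def using curv_lo_pos by simp

lemma curv_lo_min_le: "curv_lo_min \<le> curv_lo i" unfolding curv_lo_min_def by simp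

lemma c_desc_pos: "c_desc > 0" unfolding c_desc_def using curv_lo_min_pos Gamma_pos by simp

lemma period_ge_1: "period \<ge> 1" and period_covers: "\<exists>t\<in>{1..period}. i \<in> I (k + t)"
proof -
  have "\<exists>T::nat. T \<ge> 1 \<and> (\<forall>k i. \<exists>t\<in>{1..T}. i \<in> I (k + t))" using cyclic unfolding essentially_cyclic_def .
  from someI_ex[OF this] show "period \<ge> 1" "\<exists>t\<in>{1..period}. i \<in> I (k + t)"
    unfolding period_def by blast+
qed

lemma V_decrease_step: "c_desc / 2 * (step k)\<^sup>2 \<le> V k - V (Suc k)"
proof -
  define A where "A = (\<Sum>i\<in>UNIV. (norm (z (Suc k) $ i - z k $ i))\<^sup>2 / (2 * \<gamma> i))"
  define Bx where "Bx = (\<Sum>i\<in>UNIV. curv_lo i * (norm (xh (Suc k) $ i - xh k $ i))\<^sup>2)"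
  define p where "p = norm (z (Suc k) - z k)"
  define q where "q = norm (xh (Suc k) - xh k)"
  have d: "V (Suc k) + A + Bx \<le> V k" unfolding A_def Bx_def by (rule V_decrease)
  have "(1 / (2 * \<Gamma>)) * p\<^sup>2 = (\<Sum>i\<in>UNIV. (norm (z (Suc k) $ i - z k $ i))\<^sup>2 / (2 * \<Gamma>))"
    unfolding p_def norm_vec_power2 by (simp add: sum_divide_distrib)
  also have "\<dots> \<le> A" unfolding A_def
    using gamma_pos gamma_le_Gamma Gamma_pos by (intro sum_mono divide_left_mono) auto
  finally have pA: "(1 / (2 * \<Gamma>)) * p\<^sup>2 \<le> A" .
  have "curv_lo_min * q\<^sup>2 = (\<Sum>i\<in>UNIV. curv_lo_min * (norm (xh (Suc k) $ i - xh k $ i))\<^sup>2)"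
    unfolding q_def norm_vec_power2 by (simp add: sum_distrib_left)
  also have "\<dots> \<le> Bx" unfolding Bx_def using curv_lo_min_le by (intro sum_mono mult_right_mono) auto
  finally have qB: "curv_lo_min * q\<^sup>2 \<le> Bx" .
  have "c_desc * p\<^sup>2 \<le> (1 / (2 * \<Gamma>)) * p\<^sup>2" unfolding c_desc_def by (intro mult_right_mono) auto
  moreover have "c_desc * q\<^sup>2 \<le> curv_lo_min * q\<^sup>2" unfolding c_desc_def by (intro mult_right_mono) auto
  moreover have "(p + q)\<^sup>2 \<le> 2 * (p\<^sup>2 + q\<^sup>2)" using sum_squares_bound[of p q] by (simp add: power2_sum)
  then have "c_desc / 2 * (p + q)\<^sup>2 \<le> c_desc / 2 * (2 * (p\<^sup>2 + q\<^sup>2))" using c_desc_pos by (intro mult_left_mono) auto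
  ultimately have "c_desc / 2 * (p + q)\<^sup>2 \<le> A + Bx" using pA qB by (simp add: algebra_simps)
  then show ?thesis using d unfolding step_def p_def q_def by simp
qed

lemma V_Suc_le: "V (Suc k) \<le> V k"
proof -
  have "0 \<le> c_desc / 2 * (step k)\<^sup>2" using c_desc_pos by simp
  then show ?thesis using V_decrease_step[of k] by linarith
qed

lemma V_mono: "k \<le> j \<Longrightarrow> V j \<le> V k"
  by (rule lift_Suc_antimono_le[of V]) (use V_Suc_le in auto)

lemma step_nonneg: "step k \<ge> 0" unfolding step_def by simp

lemma lag_le_steps: "lag k \<le> real CARD('N) * (\<Sum>j<period. step (k + j))"
proof -
  have comp: "norm (z k $ i - xh k $ i) \<le> (\<Sum>j<period. step (k + j))" for i
  proof -
    obtain t where t: "t \<in> {1..period}" "i \<in> I (k + t)" using period_covers by blast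
    define t' where "t' = t - 1"
    have tt: "k + t = Suc (k + t')" unfolding t'_def using t by simp
    have xh: "xh (k + t) $ i = z (k + t') $ i" unfolding tt xh_Suc using t tt by simp
    have "z k $ i - xh k $ i = (z k $ i - z (k + t') $ i) + (xh (k + t) $ i - xh k $ i)" using xh by simp
    then have "norm (z k $ i - xh k $ i) \<le> norm (z k $ i - z (k + t') $ i) + norm (xh (k + t) $ i - xh k $ i)"
      by (metis norm_triangle_ineq)
    also have "\<dots> \<le> norm (z (k + t') - z k) + norm (xh (k + t) - xh k)"
      using Finite_Cartesian_Product.norm_nth_le[where x="z (k + t') - z k" and i=i]
        Finite_Cartesian_Product.norm_nth_le[where x="xh (k + t) - xh k" and i=i]
      by (simp add: norm_minus_commute)
    also have "\<dots> \<le> (\<Sum>j<t'. norm (z (Suc (k + j)) - z (k + j))) + (\<Sum>j<t. norm (xh (Suc (k + j)) - xh (k + j)))"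
      using dist_le_sum_of_steps[of z "\<lambda>j. norm (z (Suc j) - z j)" k t']
        dist_le_sum_of_steps[of xh "\<lambda>j. norm (xh (Suc j) - xh j)" k t]
      by (intro add_mono) (auto simp: dist_norm)
    also have "\<dots> \<le> (\<Sum>j<t. norm (z (Suc (k + j)) - z (k + j))) + (\<Sum>j<t. norm (xh (Suc (k + j)) - xh (k + j)))"
      unfolding t'_def by (intro add_mono sum_mono2) auto
    also have "\<dots> = (\<Sum>j<t. step (k + j))" unfolding step_def by (simp add: sum.distrib)
    also have "\<dots> \<le> (\<Sum>j<period. step (k + j))" using t by (intro sum_mono2) (auto intro: step_nonneg)
    finally show ?thesis .
  qed
  have "lag k \<le> (\<Sum>i\<in>UNIV. norm ((z k - xh k) $ i))" unfolding lag_def by (rule norm_vec_le_sum_norm)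
  also have "\<dots> \<le> (\<Sum>i\<in>(UNIV::'N set). (\<Sum>j<period. step (k + j)))" using comp by (intro sum_mono) simp
  also have "\<dots> = real CARD('N) * (\<Sum>j<period. step (k + j))" by simp
  finally show ?thesis .
qed


lemma f_continuous_on: "continuous_on A (f i)"
  using has_derivative_continuous[OF f_grad] by (intro continuous_at_imp_continuous_on) auto

lemma Phi_z_le_V: "Phi_z k \<le> V k" using V_minus_Phi_z(1)[of k] by simp

lemma z_bounded: "\<exists>R. \<forall>k. norm (z k) < R"
proof -
  obtain R where R: "\<And>x. norm x \<ge> R \<Longrightarrow> sharing_obj f g x \<ge> ereal (V 0 + 1)" using coercive by blast
  have "norm (z k) < R" for k
  proof (rule ccontr)
    assume "\<not> norm (z k) < R"
    then have "ereal (Phi_z k) \<ge> ereal (V 0 + 1)" using R[of "z k"] Phi_z_eq by simp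
    then have "Phi_z k \<ge> V 0 + 1" by simp
    moreover have "Phi_z k \<le> V 0" using Phi_z_le_V[of k] V_mono[of 0 k] by simp
    ultimately show False by simp
  qed
  then show ?thesis by blast
qed

lemma V_bdd_below: "\<exists>lb. \<forall>k. lb \<le> V k"
proof -
  obtain R where R: "\<And>k. norm (z k) < R" using z_bounded by blast
  have R0: "R > 0" using R[of 0] norm_ge_zero[of "z 0"] by linarith
  have "\<forall>i. \<exists>x\<in>cball (0::real^'n) R. \<forall>y\<in>cball 0 R. f i x \<le> f i y"
    using R0 by (intro allI continuous_attains_inf f_continuous_on) auto
  then obtain xm where xm: "\<And>i y. y \<in> cball 0 R \<Longrightarrow> f i (xm i) \<le> f i y" by metis
  obtain A B where AB: "B \<ge> 0" "\<And>u. ereal (A - B * norm u) \<le> g u" using proper_convex_lsc_norm_minorant[OF g_proper g_convex g_lsc] by blast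
  define lb where "lb = (1 / real CARD('N)) * (\<Sum>i\<in>UNIV. f i (xm i)) + (A - B * (real CARD('N) * R))"
  have "lb \<le> Phi_z k" for k
  proof -
    have zi: "norm (z k $ i) \<le> R" for i
      using Finite_Cartesian_Product.norm_nth_le[where x="z k" and i=i] R[of k] by simp
    have "(\<Sum>i\<in>UNIV. f i (xm i)) \<le> (\<Sum>i\<in>UNIV. f i (z k $ i))"
      using xm zi by (intro sum_mono) auto
    then have s1: "(1 / real CARD('N)) * (\<Sum>i\<in>UNIV. f i (xm i)) \<le> (1 / real CARD('N)) * (\<Sum>i\<in>UNIV. f i (z k $ i))"
      by (intro mult_left_mono) auto
    have "norm (u k) \<le> (\<Sum>i\<in>UNIV. norm (z k $ i))" unfolding sum_z_eq_u[symmetric] by (rule norm_sum)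
    also have "\<dots> \<le> (\<Sum>i\<in>(UNIV::'N set). R)" using zi by (intro sum_mono) auto
    finally have "norm (u k) \<le> real CARD('N) * R" by simp
    then have "A - B * (real CARD('N) * R) \<le> A - B * norm (u k)" using AB(1) by (simp add: mult_left_mono)
    also have "\<dots> \<le> gu k" using AB(2)[of "u k"] g_u[of k] by simp
    finally show ?thesis unfolding lb_def Phi_z_def F_def using s1 by simp
  qed
  then show ?thesis using Phi_z_le_V by (meson order_trans)
qed

definition Vinf :: real where "Vinf = lim V"

lemma V_tendsto: "V \<longlonglongrightarrow> Vinf" and Vinf_le: "Vinf \<le> V k"
proof -
  obtain lb where lb: "\<And>k. lb \<le> V k" using V_bdd_below by blast
  have dec: "decseq V" unfolding decseq_def using V_mono by blast
  obtain Lm where Lm: "V \<longlonglongrightarrow> Lm" "\<forall>i. Lm \<le> V i" using decseq_convergent[OF dec, of lb] lb by blast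
  then have "Vinf = Lm" unfolding Vinf_def by (simp add: limI)
  then show "V \<longlonglongrightarrow> Vinf" "Vinf \<le> V k" using Lm by auto
qed

lemma step_tendsto_0: "step \<longlonglongrightarrow> 0"
proof -
  have "(\<lambda>k. V k - V (Suc k)) \<longlonglongrightarrow> Vinf - Vinf"
    using V_tendsto LIMSEQ_Suc[OF V_tendsto] by (intro tendsto_diff)
  then have "(\<lambda>k. V k - V (Suc k)) \<longlonglongrightarrow> 0" by simp
  then have l: "(\<lambda>k. (2 / c_desc) * (V k - V (Suc k))) \<longlonglongrightarrow> 0" by (rule tendsto_mult_right_zero)
  have "(\<lambda>k. (step k)\<^sup>2) \<longlonglongrightarrow> 0"
  proof (rule tendsto_sandwich[OF _ _ tendsto_const l])
    show "\<forall>\<^sub>F n in sequentially. 0 \<le> (step n)\<^sup>2" by simp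
    show "\<forall>\<^sub>F n in sequentially. (step n)\<^sup>2 \<le> 2 / c_desc * (V n - V (Suc n))"
      using V_decrease_step c_desc_pos by (auto simp: field_simps)
  qed
  then have "(\<lambda>k. sqrt ((step k)\<^sup>2)) \<longlonglongrightarrow> sqrt 0" by (rule tendsto_real_sqrt)
  then show ?thesis using step_nonneg by simp
qed

lemma lag_tendsto_0: "lag \<longlonglongrightarrow> 0"
proof -
  have "(\<lambda>k. step (k + j)) \<longlonglongrightarrow> 0" for j using LIMSEQ_ignore_initial_segment[OF step_tendsto_0, of j] .
  then have "(\<lambda>k. \<Sum>j<period. step (k + j)) \<longlonglongrightarrow> (\<Sum>j<period. 0)" by (intro tendsto_sum) auto
  then have "(\<lambda>k. \<Sum>j<period. step (k + j)) \<longlonglongrightarrow> 0" by simp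
  then have l: "(\<lambda>k. real CARD('N) * (\<Sum>j<period. step (k + j))) \<longlonglongrightarrow> 0" by (rule tendsto_mult_right_zero)
  show ?thesis
  proof (rule tendsto_sandwich[OF _ _ tendsto_const l])
    show "\<forall>\<^sub>F n in sequentially. 0 \<le> lag n" unfolding lag_def by simp
    show "\<forall>\<^sub>F n in sequentially. lag n \<le> real CARD('N) * (\<Sum>j<period. step (n + j))" using lag_le_steps by simp
  qed
qed

lemma Phi_z_tendsto: "Phi_z \<longlonglongrightarrow> Vinf"
proof -
  have "(\<lambda>k. (lag k)\<^sup>2) \<longlonglongrightarrow> 0" using tendsto_power[OF lag_tendsto_0, of 2] by simp
  then have l: "(\<lambda>k. C_gap * (lag k)\<^sup>2) \<longlonglongrightarrow> 0" by (rule tendsto_mult_right_zero)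
  have "(\<lambda>k. V k - Phi_z k) \<longlonglongrightarrow> 0"
  proof (rule tendsto_sandwich[OF _ _ tendsto_const l])
    show "\<forall>\<^sub>F n in sequentially. 0 \<le> V n - Phi_z n" using V_minus_Phi_z(1) by simp
    show "\<forall>\<^sub>F n in sequentially. V n - Phi_z n \<le> C_gap * (lag n)\<^sup>2" using V_minus_Phi_z(2) unfolding lag_def by simp
  qed
  from tendsto_diff[OF V_tendsto this] show ?thesis by simp
qed




definition kl_exp :: real where "kl_exp = max \<theta> (1/2)"

definition kl_const :: "real \<Rightarrow> real" where
  "kl_const \<rho> = 2 * (C_gap powr kl_exp + \<rho> * (1 - \<theta>) * C_sub) + 1"

lemma kl_exp_bounds: "0 < kl_exp" "kl_exp < 1" "\<theta> \<le> kl_exp" "1 \<le> 2 * kl_exp"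
  unfolding kl_exp_def using theta by auto

lemma kl_const_pos: "\<rho> > 0 \<Longrightarrow> kl_const \<rho> > 0"
  unfolding kl_const_def using C_gap_nonneg C_sub_nonneg theta by (simp add: add_nonneg_pos)

lemma F_tendsto: "X \<longlonglongrightarrow> x \<Longrightarrow> (\<lambda>j. F (X j)) \<longlonglongrightarrow> F x"
  unfolding F_def using has_derivative_continuous[OF f_grad]
  by (intro tendsto_intros isCont_tendsto_compose[of _ "f _"]) auto

lemma V_Phi_gap_powr: "lag k \<le> 1 \<Longrightarrow> (V k - Phi_z k) powr kl_exp \<le> C_gap powr kl_exp * lag k"
proof -
  assume "lag k \<le> 1"
  have "(V k - Phi_z k) powr kl_exp \<le> (C_gap * (lag k)\<^sup>2) powr kl_exp"
    using V_minus_Phi_z[of k] kl_exp_bounds unfolding lag_def by (intro powr_mono2) auto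
  also have "\<dots> = C_gap powr kl_exp * ((lag k)\<^sup>2) powr kl_exp" using C_gap_nonneg by (simp add: powr_mult)
  also have "\<dots> \<le> C_gap powr kl_exp * lag k"
    using power2_powr_le_self[OF _ \<open>lag k \<le> 1\<close> kl_exp_bounds(4)] by (intro mult_left_mono) (auto simp: lag_def)
  finally show ?thesis .
qed

text \<open>The KL inequality at \<open>z k\<close>, with \<open>subgrad k\<close> bounding the distance of \<open>0\<close> to the
  limiting subdifferential.\<close>
lemma Phi_z_gap_powr:
  assumes \<Phi>xs: "sharing_obj f g xs = ereal Vinf"
    and KLloc: "KL_ineq_near (sharing_obj f g) \<theta> xs \<epsilon> \<eta> \<rho>"
    and \<rho>: "\<rho> > 0" and near: "dist (z k) xs < \<epsilon>" and gap: "0 < Phi_z k - Vinf" "Phi_z k - Vinf < \<eta>"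
  shows "(Phi_z k - Vinf) powr \<theta> \<le> \<rho> * (1 - \<theta>) * C_sub * lag k"
proof -
  define q where "q = Phi_z k - Vinf"
  have sub: "subgrad k \<in> lim_subdiff (sharing_obj f g) (z k)"
    using reg_subdiff_imp_lim_subdiff[OF subgrad_in_reg_subdiff] .
  have "norm (z k - xs) < \<epsilon> \<and> ereal Vinf < ereal (Phi_z k) \<and> ereal (Phi_z k) < ereal Vinf + ereal \<eta>
      \<and> lim_subdiff (sharing_obj f g) (z k) \<noteq> {}"
    using sub near gap by (auto simp: dist_norm)
  then have "1 \<le> \<rho> * (1 - \<theta>) * (real_of_ereal (ereal (Phi_z k) - ereal Vinf)) powr (- \<theta>)
      * infdist 0 (lim_subdiff (sharing_obj f g) (z k))"
    using KLloc[unfolded KL_ineq_near_def, rule_format, of "z k"] unfolding \<Phi>xs Phi_z_eq by blast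
  then have "1 \<le> \<rho> * (1 - \<theta>) * q powr (- \<theta>) * infdist 0 (lim_subdiff (sharing_obj f g) (z k))"
    unfolding q_def by simp
  also have "\<dots> \<le> \<rho> * (1 - \<theta>) * q powr (- \<theta>) * (C_sub * lag k)"
  proof (intro mult_left_mono)
    have "infdist 0 (lim_subdiff (sharing_obj f g) (z k)) \<le> dist 0 (subgrad k)" by (rule infdist_le[OF sub])
    then show "infdist 0 (lim_subdiff (sharing_obj f g) (z k)) \<le> C_sub * lag k"
      using norm_subgrad_le[of k] unfolding lag_def by simp
  qed (use \<rho> theta in auto)
  finally have "q powr \<theta> * 1 \<le> q powr \<theta> * (\<rho> * (1 - \<theta>) * q powr (- \<theta>) * (C_sub * lag k))"
    by (intro mult_left_mono) auto
  also have "\<dots> = (q powr \<theta> * q powr (- \<theta>)) * (\<rho> * (1 - \<theta>) * C_sub * lag k)" by (simp add: algebra_simps)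
  also have "q powr \<theta> * q powr (- \<theta>) = 1" using gap unfolding q_def by (simp add: powr_add[symmetric])
  finally show ?thesis unfolding q_def by simp
qed

text \<open>Since \<open>V\<close> only overestimates the objective along \<open>z\<close> by \<open>O(lag k\<^sup>2)\<close>, the KL
  inequality transfers to the Lyapunov gap \<open>V k - Vinf\<close>, with the exponent raised to at least
  \<open>1/2\<close>.\<close>
lemma kl_bound_along_z:
  assumes \<Phi>xs: "sharing_obj f g xs = ereal Vinf"
    and KLloc: "KL_ineq_near (sharing_obj f g) \<theta> xs \<epsilon> \<eta> \<rho>"
    and \<rho>: "\<rho> > 0" and near: "dist (z k) xs < \<epsilon>"
    and lag1: "lag k \<le> 1" and small: "Phi_z k < Vinf + min \<eta> 1"
  shows "(V k - Vinf) powr kl_exp \<le> kl_const \<rho> * lag k"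
proof -
  define p where "p = V k - Phi_z k"
  define q where "q = Phi_z k - Vinf"
  have D0: "0 \<le> lag k" unfolding lag_def by simp
  have p0: "0 \<le> p" unfolding p_def using V_minus_Phi_z(1) by simp
  have pa: "p powr kl_exp \<le> C_gap powr kl_exp * lag k" unfolding p_def using V_Phi_gap_powr[OF lag1] .
  have r: "V k - Vinf = p + q" unfolding p_def q_def by simp
  show ?thesis
  proof (cases "q \<le> 0")
    case True
    have "(V k - Vinf) powr kl_exp \<le> p powr kl_exp"
      unfolding r using True Vinf_le[of k] r kl_exp_bounds by (intro powr_mono2) auto
    also have "\<dots> \<le> kl_const \<rho> * lag k"
    proof -
      have "0 \<le> \<rho> * (1 - \<theta>) * C_sub" using \<rho> theta C_sub_nonneg by simp
      then have "C_gap powr kl_exp \<le> kl_const \<rho>" unfolding kl_const_def by simp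
      then show ?thesis using pa D0 by (meson mult_right_mono order_trans)
    qed
    finally show ?thesis .
  next
    case False
    then have q: "0 < q" "q < 1" "q < \<eta>" using small unfolding q_def by auto
    have "q powr kl_exp \<le> q powr \<theta>" using q kl_exp_bounds by (intro powr_mono') auto
    also have "\<dots> \<le> \<rho> * (1 - \<theta>) * C_sub * lag k"
      using Phi_z_gap_powr[OF \<Phi>xs KLloc \<rho> near] q unfolding q_def by blast
    finally have qa: "q powr kl_exp \<le> \<rho> * (1 - \<theta>) * C_sub * lag k" .
    have "(V k - Vinf) powr kl_exp \<le> 2 * (p powr kl_exp + q powr kl_exp)"
      unfolding r using p0 q kl_exp_bounds by (intro powr_add_le) auto
    also have "\<dots> \<le> kl_const \<rho> * lag k" using pa qa D0 unfolding kl_const_def by (simp add: algebra_simps)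
    finally show ?thesis .
  qed
qed


lemma z_convergent_subseq: "\<exists>xs \<phi>. strict_mono \<phi> \<and> (\<lambda>j. z (\<phi> j)) \<longlonglongrightarrow> xs"
proof -
  obtain R where "\<And>k. norm (z k) < R" using z_bounded by blast
  then have "\<forall>k. z k \<in> cball 0 R" by (simp add: less_imp_le)
  then obtain xs \<phi> where "strict_mono \<phi>" "(z \<circ> \<phi>) \<longlonglongrightarrow> xs"
    using seq_compactE[OF compact_imp_seq_compact[OF compact_cball]] by blast
  then show ?thesis by (auto simp: o_def)
qed

lemma subgrad_tendsto_0: "subgrad \<longlonglongrightarrow> 0"
proof (rule tendsto_norm_zero_cancel, rule tendsto_sandwich[OF _ _ tendsto_const])
  show "\<forall>\<^sub>F k in sequentially. norm (subgrad k) \<le> C_sub * lag k" using norm_subgrad_le unfolding lag_def by simp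
  show "(\<lambda>k. C_sub * lag k) \<longlonglongrightarrow> 0" using tendsto_mult_right_zero[OF lag_tendsto_0] .
qed simp

text \<open>The minorants of \<open>Phi_quadratic_minorant\<close> pass to the limit along a convergent
  subsequence, their slopes \<open>subgrad k\<close> vanishing.\<close>
lemma cluster_point_minorant:
  assumes \<phi>: "strict_mono \<phi>" and lim: "(\<lambda>j. z (\<phi> j)) \<longlonglongrightarrow> xs"
  shows "ereal (Vinf - C_quad * (norm (x - xs))\<^sup>2) \<le> sharing_obj f g x"
proof -
  have "(\<lambda>j. Phi_z (\<phi> j) + inner (subgrad (\<phi> j)) (x - z (\<phi> j)) - C_quad * (norm (x - z (\<phi> j)))\<^sup>2)
      \<longlonglongrightarrow> Vinf + inner 0 (x - xs) - C_quad * (norm (x - xs))\<^sup>2"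
    using LIMSEQ_subseq_LIMSEQ[OF Phi_z_tendsto \<phi>] LIMSEQ_subseq_LIMSEQ[OF subgrad_tendsto_0 \<phi>] lim
    by (intro tendsto_intros) (auto simp: o_def)
  then have "(\<lambda>j. Phi_z (\<phi> j) + inner (subgrad (\<phi> j)) (x - z (\<phi> j)) - C_quad * (norm (x - z (\<phi> j)))\<^sup>2)
      \<longlonglongrightarrow> Vinf - C_quad * (norm (x - xs))\<^sup>2" by simp
  then have "(\<lambda>j. ereal (Phi_z (\<phi> j) + inner (subgrad (\<phi> j)) (x - z (\<phi> j)) - C_quad * (norm (x - z (\<phi> j)))\<^sup>2))
      \<longlonglongrightarrow> ereal (Vinf - C_quad * (norm (x - xs))\<^sup>2)"
    by (rule tendsto_ereal)
  then show ?thesis by (rule LIMSEQ_le_const2) (use Phi_quadratic_minorant in auto)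
qed

lemma cluster_point_value:
  assumes \<phi>: "strict_mono \<phi>" and lim: "(\<lambda>j. z (\<phi> j)) \<longlonglongrightarrow> xs"
  shows "sharing_obj f g xs = ereal Vinf"
proof -
  have gu: "(\<lambda>j. gu (\<phi> j)) \<longlonglongrightarrow> Vinf - F xs"
    using tendsto_diff[OF LIMSEQ_subseq_LIMSEQ[OF Phi_z_tendsto \<phi>] F_tendsto[OF lim]]
    by (simp add: Phi_z_def o_def)
  have u: "(\<lambda>j. u (\<phi> j)) \<longlonglongrightarrow> (\<Sum>i\<in>UNIV. xs $ i)"
    unfolding sum_z_eq_u[symmetric] by (intro tendsto_sum tendsto_vec_nth lim)
  have "g (\<Sum>i\<in>UNIV. xs $ i) \<le> ereal (Vinf - F xs)"
    by (rule lsc_fun_le_lim[OF g_lsc u _ gu]) (simp add: g_u)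
  then have "sharing_obj f g xs \<le> ereal (F xs) + ereal (Vinf - F xs)"
    unfolding sharing_obj_eq by (rule add_left_mono)
  then have "sharing_obj f g xs \<le> ereal Vinf" by simp
  then show ?thesis using cluster_point_minorant[OF assms, of xs] by simp
qed

lemma cluster_point_stationary:
  assumes "strict_mono \<phi>" "(\<lambda>j. z (\<phi> j)) \<longlonglongrightarrow> xs"
  shows "0 \<in> reg_subdiff (sharing_obj f g) xs"
proof (rule reg_subdiff_of_quadratic_minorant)
  show "sharing_obj f g xs = ereal Vinf" by (rule cluster_point_value[OF assms])
  show "ereal (Vinf + inner 0 (x - xs) - C_quad * (norm (x - xs))\<^sup>2) \<le> sharing_obj f g x" for x
    using cluster_point_minorant[OF assms] by simp
qed (rule C_quad_nonneg)

lemma kl_descent_at_cluster_point: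
  assumes \<phi>: "strict_mono \<phi>" and lim: "(\<lambda>j. z (\<phi> j)) \<longlonglongrightarrow> xs"
  shows "\<exists>B \<epsilon> K0. kl_descent_sequence z xs (\<lambda>k. V k - Vinf) step lag (c_desc / 2) (real CARD('N))
           B kl_exp \<epsilon> period K0"
proof -
  have \<Phi>xs: "sharing_obj f g xs = ereal Vinf" by (rule cluster_point_value[OF assms])
  have "lim_subdiff (sharing_obj f g) xs \<noteq> {}"
    using reg_subdiff_imp_lim_subdiff[OF cluster_point_stationary[OF assms]] by blast
  then obtain \<epsilon> \<eta> \<rho> where e: "\<epsilon> > 0" "\<eta> > 0" "\<rho> > 0"
    and KLloc: "KL_ineq_near (sharing_obj f g) \<theta> xs \<epsilon> \<eta> \<rho>"
    using KL_exponentD[OF KL] by blast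
  have "eventually (\<lambda>k. lag k < 1) sequentially" using lag_tendsto_0 by (intro order_tendstoD) auto
  moreover have "eventually (\<lambda>k. Phi_z k < Vinf + min \<eta> 1) sequentially"
    using Phi_z_tendsto e by (intro order_tendstoD) auto
  ultimately have "eventually (\<lambda>k. lag k < 1 \<and> Phi_z k < Vinf + min \<eta> 1) sequentially"
    by (rule eventually_conj)
  then obtain K0 where K0: "\<And>k. k \<ge> K0 \<Longrightarrow> lag k < 1 \<and> Phi_z k < Vinf + min \<eta> 1"
    unfolding eventually_sequentially by blast
  have "kl_descent_sequence z xs (\<lambda>k. V k - Vinf) step lag (c_desc / 2) (real CARD('N))
      (kl_const \<rho>) kl_exp \<epsilon> period K0"
  proof
    show "\<delta> > 0 \<Longrightarrow> \<exists>k\<ge>K. dist (z k) xs < \<delta>" for K \<delta> by (rule subseq_limit_frequently_near[OF \<phi> lim])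
    show "(V k - Vinf) powr kl_exp \<le> kl_const \<rho> * lag k" if "k \<ge> K0" "dist (z k) xs < \<epsilon>" for k
      using kl_bound_along_z[where \<epsilon> = \<epsilon> and \<eta> = \<eta> and \<rho> = \<rho>, OF \<Phi>xs KLloc e(3) that(2)] K0[OF that(1)] by simp
    show "0 \<le> V k - Vinf" for k using Vinf_le[of k] by simp
    show "(\<lambda>k. V k - Vinf) \<longlonglongrightarrow> 0" using tendsto_diff[OF V_tendsto tendsto_const[of Vinf]] by simp
    show "c_desc / 2 * (step k)\<^sup>2 \<le> V k - Vinf - (V (Suc k) - Vinf)" for k using V_decrease_step[of k] by simp
    show "c_desc / 2 > 0" using c_desc_pos by simp
    show "0 \<le> step k" for k by (rule step_nonneg)
    show "dist (z (Suc k)) (z k) \<le> step k" for k unfolding step_def dist_norm by simp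
    show "lag k \<le> real CARD('N) * (\<Sum>j<period. step (k + j))" for k by (rule lag_le_steps)
    show "period \<ge> 1" by (rule period_ge_1)
    show "real CARD('N) > 0" by simp
    show "0 < kl_exp" "kl_exp < 1" using kl_exp_bounds by auto
    show "\<epsilon> > 0" by (rule e(1))
    show "kl_const \<rho> > 0" by (rule kl_const_pos[OF e(3)])
  qed
  then show ?thesis by blast
qed


lemma z_converges:
  "\<exists>xs. z \<longlonglongrightarrow> xs \<and> 0 \<in> reg_subdiff (sharing_obj f g) xs
     \<and> (\<theta> \<le> 1/2 \<longrightarrow> (\<exists>c \<rho>. 0 \<le> \<rho> \<and> \<rho> < 1 \<and> (\<forall>k. norm (z k - xs) \<le> c * \<rho> ^ k)))"
proof -
  obtain xs \<phi> where \<phi>: "strict_mono \<phi>" "(\<lambda>j. z (\<phi> j)) \<longlonglongrightarrow> xs" using z_convergent_subseq by blast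
  then obtain B \<epsilon> K0 where "kl_descent_sequence z xs (\<lambda>k. V k - Vinf) step lag (c_desc / 2)
      (real CARD('N)) B kl_exp \<epsilon> period K0"
    using kl_descent_at_cluster_point by blast
  then interpret K: kl_descent_sequence z xs "\<lambda>k. V k - Vinf" step lag "c_desc / 2" "real CARD('N)"
    B kl_exp \<epsilon> period K0 .
  have "\<theta> \<le> 1/2 \<Longrightarrow> kl_exp = 1/2" unfolding kl_exp_def by simp
  then have "\<theta> \<le> 1/2 \<longrightarrow> (\<exists>c \<rho>. 0 \<le> \<rho> \<and> \<rho> < 1 \<and> (\<forall>k. norm (z k - xs) \<le> c * \<rho> ^ k))"
    using K.linear_rate by (simp add: dist_norm)
  then show ?thesis using K.converges_with_tail_bound cluster_point_stationary[OF \<phi>] by blast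
qed

end

theorem corollary4p3:
  fixes f :: "'N::finite \<Rightarrow> real^'n::finite \<Rightarrow> real"
    and gf :: "'N \<Rightarrow> real^'n \<Rightarrow> real^'n"
    and L :: "'N \<Rightarrow> real"
    and g :: "real^'n \<Rightarrow> ereal"
    and \<theta> :: real
    and \<gamma> :: "'N \<Rightarrow> real"
    and xinit :: "real^'n^'N"
    and I :: "nat \<Rightarrow> 'N set"
  assumes g_proper: "proper_fun g" and g_convex: "ereal_convex g" and g_lsc: "lsc_fun g"
    and f_grad: "\<And>i x. (f i has_derivative (\<lambda>h. inner (gf i x) h)) (at x)"
    and L_pos: "\<And>i. L i > 0"
    and f_lip: "\<And>i x y. norm (gf i x - gf i y) \<le> L i * norm (x - y)"
    and coercive: "\<And>M::real. \<exists>R. \<forall>x. norm x \<ge> R \<longrightarrow> sharing_obj f g x \<ge> ereal M"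
    and theta: "0 < \<theta>" "\<theta> < 1"
    and KL: "KL_exponent (sharing_obj f g) \<theta>"
    and gamma: "\<And>i. 0 < \<gamma> i \<and> \<gamma> i < real CARD('N) / L i"
    and cyclic: "essentially_cyclic I"
  shows "\<exists>xs. sharing_z gf g \<gamma> xinit I \<longlonglongrightarrow> xs
            \<and> 0 \<in> reg_subdiff (sharing_obj f g) xs
            \<and> (\<theta> \<le> 1/2 \<longrightarrow> (\<exists>c \<rho>. 0 \<le> \<rho> \<and> \<rho> < 1 \<and>
                  (\<forall>k. norm (sharing_z gf g \<gamma> xinit I k - xs) \<le> c * \<rho> ^ k)))"
proof -
  interpret sharing f gf L g \<theta> \<gamma> xinit I
    using assms by unfold_locales auto
  have "z = sharing_z gf g \<gamma> xinit I" by (rule ext) (simp add: z_def)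
  then show ?thesis using z_converges by simp
qed

end
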